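(* Let $F\in\mathcal{O}_K[x,z]$ be a non-singular binary quartic form. Suppose that $v(F)\in\{0,1\}$ but $F$ has positive level; if $\mathrm{char}(k)=2$, suppose further that $F$ is non-minimal. Then: (i) the reduction modulo $\pi$ of $F_1(x,z)=\pi^{-v(F)}F(x,z)$ has a triple or quadruple root defined over $k$; (ii) the following procedure replaces $F$ by a $K$-equivalent integral binary quartic of the same level: apply a substitution $(x,z)\leftarrow(m_{11}x+m_{21}z,\ m_{12}x+m_{22}z)$ with $(m_{ij})\in GL_2(\mathcal{O}_K)$ moving the repeated root of $F_1$ mod $\pi$ to $(x:z)=(0:1)$, and then replace $F(x,z)$ by $\pi^{-2}F(\pi x,z)$; (iii) if $F$ is non-minimal, then at most $2$ iterations of the procedure in (ii) produce a binary quartic $F$ with $v(F)\geq2$.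
   Context: $K$ is a field with normalised discrete valuation $v:K^\times\to\mathbb{Z}$, valuation ring $\mathcal{O}_K$, uniformiser $\pi$, and perfect residue field $k=\mathcal{O}_K/\pi\mathcal{O}_K$. For a binary form $F$, $v(F)$ is the minimum of the valuations of its coefficients. A binary quartic $F=ax^4+bx^3z+cx^2z^2+dxz^3+ez^4$ over $K$ is regarded as the genus one model $y^2=F(x,z)$. Binary quartics $F,F'$ are $K$-equivalent if $F'(x,z)=\mu^2F(m_{11}x+m_{21}z,m_{12}x+m_{22}z)$ for some $\mu\in K^\times$ and $(m_{ij})\in GL_2(K)$. Invariants: $I=12ae-3bd+c^2$, $J=72ace-27ad^2-27b^2e+9bcd-2c^3$, $c_4=2^4I$, $c_6=2^5J$, $\Delta(F)=(c_4^3-c_6^2)/1728$; $F$ is non-singular if $\Delta(F)\ne0$. Then $y^2=F$ defines a smooth genus one curve whose Jacobian $E$ has minimal discriminant $\Delta_E$ over $K$, and $v(\Delta(F))=v(\Delta_E)+12\ell$ for an integer $\ell$, the level of $F$. $F$ is integral if $F\in\mathcal{O}_K[x,z]$; an integral $F$ is minimal if $v(\Delta(F))$ is minimal among all integral binary quartics $K$-equivalent to $F$, and non-minimal otherwise. *)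

theory Defs
  imports "HOL-Computational_Algebra.Computational_Algebra"
begin

text \<open>A normalised discrete valuation on a field, given as a function on the nonzero
  elements (its value at 0 is irrelevant and never used).\<close>

definition discrete_valuation :: "('a::field \<Rightarrow> int) \<Rightarrow> bool" where
  "discrete_valuation v \<longleftrightarrow>
     (\<forall>x y. x \<noteq> 0 \<longrightarrow> y \<noteq> 0 \<longrightarrow> v (x * y) = v x + v y) \<and>
     (\<forall>x y. x \<noteq> 0 \<longrightarrow> y \<noteq> 0 \<longrightarrow> x + y \<noteq> 0 \<longrightarrow> min (v x) (v y) \<le> v (x + y)) \<and>
     (\<forall>n. \<exists>x. x \<noteq> 0 \<and> v x = n)"

text \<open>vge v n x: \<open>v(x) \<ge> n\<close> with the convention \<open>v(0) = \<infinity>\<close>.\<close>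
definition vge :: "('a::field \<Rightarrow> int) \<Rightarrow> int \<Rightarrow> 'a \<Rightarrow> bool" where
  "vge v n x \<longleftrightarrow> x = 0 \<or> n \<le> v x"

definition in_O :: "('a::field \<Rightarrow> int) \<Rightarrow> 'a \<Rightarrow> bool" where
  "in_O v x \<longleftrightarrow> vge v 0 x"

text \<open>The residue field \<open>k = O_K/\<pi>O_K\<close> is perfect: whenever \<open>char k = p > 0\<close>
  (i.e. the prime \<open>p\<close> lies in \<open>\<pi>O_K\<close>) the Frobenius of \<open>k\<close> is surjective.\<close>
definition residue_field_perfect :: "('a::field \<Rightarrow> int) \<Rightarrow> bool" where
  "residue_field_perfect v \<longleftrightarrow>
     (\<forall>p::nat. prime p \<longrightarrow> vge v 1 (of_nat p) \<longrightarrow>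
        (\<forall>x. in_O v x \<longrightarrow> (\<exists>y. in_O v y \<and> vge v 1 (x - y ^ p))))"

definition residue_char_2 :: "('a::field \<Rightarrow> int) \<Rightarrow> bool" where
  "residue_char_2 v \<longleftrightarrow> vge v 1 (2::'a)"

text \<open>A binary form of degree \<open>n\<close> is represented by its dehomogenisation
  \<open>F(x,1)\<close>, a polynomial of degree \<open>\<le> n\<close>: the coefficient of \<open>x^i z^(n-i)\<close> is
  coeff F i.  Thus \<open>F = ax^4+bx^3z+cx^2z^2+dxz^3+ez^4\<close> corresponds to
  \<open>[:e,d,c,b,a:]\<close>, and products of forms correspond to products of polynomials.\<close>

definition binary_quartic :: "'a::field poly \<Rightarrow> bool" where
  "binary_quartic F \<longleftrightarrow> degree F \<le> 4"

definition bq_a :: "'a::field poly \<Rightarrow> 'a" where "bq_a F = coeff F 4"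
definition bq_b :: "'a::field poly \<Rightarrow> 'a" where "bq_b F = coeff F 3"
definition bq_c :: "'a::field poly \<Rightarrow> 'a" where "bq_c F = coeff F 2"
definition bq_d :: "'a::field poly \<Rightarrow> 'a" where "bq_d F = coeff F 1"
definition bq_e :: "'a::field poly \<Rightarrow> 'a" where "bq_e F = coeff F 0"

definition bq_I :: "'a::field poly \<Rightarrow> 'a" where
  "bq_I F = (let a = bq_a F; b = bq_b F; c = bq_c F; d = bq_d F; e = bq_e F in
     12*a*e - 3*b*d + c^2)"

definition bq_J :: "'a::field poly \<Rightarrow> 'a" where
  "bq_J F = (let a = bq_a F; b = bq_b F; c = bq_c F; d = bq_d F; e = bq_e F in
     72*a*c*e - 27*a*d^2 - 27*b^2*e + 9*b*c*d - 2*c^3)"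

definition bq_c4 :: "'a::field poly \<Rightarrow> 'a" where "bq_c4 F = 16 * bq_I F"
definition bq_c6 :: "'a::field poly \<Rightarrow> 'a" where "bq_c6 F = 32 * bq_J F"

text \<open>\<open>\<Delta>(F) = (c4^3 - c6^2)/1728\<close>, written as the integer polynomial it is
  (namely 16 times the classical discriminant), so that it makes sense in every
  characteristic.\<close>
definition bq_disc :: "'a::field poly \<Rightarrow> 'a" where
  "bq_disc F = (let a = bq_a F; b = bq_b F; c = bq_c F; d = bq_d F; e = bq_e F in
     16 * (256*a^3*e^3 - 192*a^2*b*d*e^2 - 128*a^2*c^2*e^2 + 144*a^2*c*d^2*e
       - 27*a^2*d^4 + 144*a*b^2*c*e^2 - 6*a*b^2*d^2*e - 80*a*b*c^2*d*e
       + 18*a*b*c*d^3 + 16*a*c^4*e - 4*a*c^3*d^2 - 27*b^4*e^2 + 18*b^3*c*d*e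
       - 4*b^3*d^3 - 4*b^2*c^3*e + b^2*c^2*d^2))"

definition bq_nonsingular :: "'a::field poly \<Rightarrow> bool" where
  "bq_nonsingular F \<longleftrightarrow> bq_disc F \<noteq> 0"

definition bq_integral :: "('a::field \<Rightarrow> int) \<Rightarrow> 'a poly \<Rightarrow> bool" where
  "bq_integral v F \<longleftrightarrow> (\<forall>i. in_O v (coeff F i))"

definition bq_val :: "('a::field \<Rightarrow> int) \<Rightarrow> 'a poly \<Rightarrow> int" where
  "bq_val v F = Min (v ` {coeff F i | i. i \<le> 4 \<and> coeff F i \<noteq> 0})"

definition bq_subst :: "'a::field poly \<Rightarrow> 'a \<Rightarrow> 'a \<Rightarrow> 'a \<Rightarrow> 'a \<Rightarrow> 'a poly" where
  "bq_subst F m11 m12 m21 m22 =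
     (\<Sum>i\<le>4. smult (coeff F i) ([:m21, m11:] ^ i * [:m22, m12:] ^ (4 - i)))"

definition bq_equiv :: "'a::field poly \<Rightarrow> 'a poly \<Rightarrow> bool" where
  "bq_equiv F F' \<longleftrightarrow> (\<exists>\<mu> m11 m12 m21 m22. \<mu> \<noteq> 0 \<and> m11 * m22 - m12 * m21 \<noteq> 0 \<and>
     F' = smult (\<mu>^2) (bq_subst F m11 m12 m21 m22))"

definition GL2_O :: "('a::field \<Rightarrow> int) \<Rightarrow> 'a \<Rightarrow> 'a \<Rightarrow> 'a \<Rightarrow> 'a \<Rightarrow> bool" where
  "GL2_O v m11 m12 m21 m22 \<longleftrightarrow> in_O v m11 \<and> in_O v m12 \<and> in_O v m21 \<and> in_O v m22 \<and>
     m11 * m22 - m12 * m21 \<noteq> 0 \<and> v (m11 * m22 - m12 * m21) = 0"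

text \<open>For integral \<open>F\<close>: the point \<open>(x0:z0) \<in> P^1(k)\<close> (with \<open>x0, z0 \<in> O_K\<close> not both
  in \<open>\<pi>O_K\<close>) is a root of multiplicity \<open>\<ge> m\<close> of \<open>F mod \<pi>\<close>, i.e. the \<open>m\<close>-th power of
  the linear form \<open>z0 x - x0 z\<close> divides \<open>F mod \<pi>\<close> in \<open>k[x,z]\<close>.\<close>
definition bq_root_mult_ge ::
    "('a::field \<Rightarrow> int) \<Rightarrow> 'a poly \<Rightarrow> 'a \<Rightarrow> 'a \<Rightarrow> nat \<Rightarrow> bool" where
  "bq_root_mult_ge v F x0 z0 m \<longleftrightarrow>
     in_O v x0 \<and> in_O v z0 \<and> \<not> (vge v 1 x0 \<and> vge v 1 z0) \<and>
     (\<exists>H. degree H \<le> 4 - m \<and> (\<forall>i. in_O v (coeff H i)) \<and>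
          (\<forall>i. vge v 1 (coeff (F - [:- x0, z0:] ^ m * H) i)))"

type_synonym 'a weierstrass = "'a \<times> 'a \<times> 'a \<times> 'a \<times> 'a"  \<comment> \<open>\<open>(a1,a2,a3,a4,a6)\<close>\<close>

definition w_disc :: "'a::field weierstrass \<Rightarrow> 'a" where
  "w_disc W = (case W of (a1, a2, a3, a4, a6) \<Rightarrow>
     (let b2 = a1^2 + 4*a2; b4 = 2*a4 + a1*a3; b6 = a3^2 + 4*a6;
          b8 = a1^2*a6 + 4*a2*a6 - a1*a3*a4 + a2*a3^2 - a4^2
      in - (b2^2*b8) - 8*b4^3 - 27*b6^2 + 9*b2*b4*b6))"

definition w_integral :: "('a::field \<Rightarrow> int) \<Rightarrow> 'a weierstrass \<Rightarrow> bool" where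
  "w_integral v W = (case W of (a1, a2, a3, a4, a6) \<Rightarrow>
     in_O v a1 \<and> in_O v a2 \<and> in_O v a3 \<and> in_O v a4 \<and> in_O v a6)"

text \<open>\<open>K\<close>-isomorphism of Weierstrass equations via
  \<open>x = u^2 x' + r, y = u^3 y' + s u^2 x' + t\<close> (Silverman, Table 3.1).\<close>
definition w_iso :: "'a::field weierstrass \<Rightarrow> 'a weierstrass \<Rightarrow> bool" where
  "w_iso W W' = (case W of (a1, a2, a3, a4, a6) \<Rightarrow> case W' of (a1', a2', a3', a4', a6') \<Rightarrow>
     (\<exists>u r s t. u \<noteq> 0 \<and>
        u * a1' = a1 + 2*s \<and>
        u^2 * a2' = a2 - s*a1 + 3*r - s^2 \<and>
        u^3 * a3' = a3 + r*a1 + 2*t \<and>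
        u^4 * a4' = a4 - s*a3 + 2*r*a2 - (t + r*s)*a1 + 3*r^2 - 2*s*t \<and>
        u^6 * a6' = a6 + r*a4 + r^2*a2 + r^3 - t*a3 - t^2 - r*t*a1))"

definition min_disc_val :: "('a::field \<Rightarrow> int) \<Rightarrow> 'a weierstrass \<Rightarrow> int" where
  "min_disc_val v W = int (LEAST n::nat. \<exists>W'. w_integral v W' \<and> w_iso W W' \<and>
      w_disc W' \<noteq> 0 \<and> v (w_disc W') = int n)"

text \<open>The Jacobian of \<open>y^2 = F(x,z)\<close> (char K \<noteq> 2):
  \<open>y^2 = x^3 + c x^2 + (bd - 4ae) x + (ad^2 + b^2 e - 4ace)\<close>; its invariants are
  \<open>c4 = 16 I\<close>, \<open>c6 = 32 J\<close>, and its discriminant equals \<open>\<Delta>(F)\<close>.\<close>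
definition bq_jacobian :: "'a::field poly \<Rightarrow> 'a weierstrass" where
  "bq_jacobian F = (let a = bq_a F; b = bq_b F; c = bq_c F; d = bq_d F; e = bq_e F in
     (0, c, 0, b*d - 4*a*e, a*d^2 + b^2*e - 4*a*c*e))"

definition bq_level :: "('a::field \<Rightarrow> int) \<Rightarrow> 'a poly \<Rightarrow> int" where
  "bq_level v F = (v (bq_disc F) - min_disc_val v (bq_jacobian F)) div 12"

definition bq_minimal :: "('a::field \<Rightarrow> int) \<Rightarrow> 'a poly \<Rightarrow> bool" where
  "bq_minimal v F \<longleftrightarrow> binary_quartic F \<and> bq_integral v F \<and>
     (\<forall>G. binary_quartic G \<longrightarrow> bq_integral v G \<longrightarrow> bq_equiv F G \<longrightarrow>
          v (bq_disc F) \<le> v (bq_disc G))"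

definition bq_non_minimal :: "('a::field \<Rightarrow> int) \<Rightarrow> 'a poly \<Rightarrow> bool" where
  "bq_non_minimal v F \<longleftrightarrow> binary_quartic F \<and> bq_integral v F \<and> \<not> bq_minimal v F"

definition bq_F1 :: "('a::field \<Rightarrow> int) \<Rightarrow> 'a \<Rightarrow> 'a poly \<Rightarrow> 'a poly" where
  "bq_F1 v \<pi> F = smult (\<pi> powi (- bq_val v F)) F"

text \<open>One step: choose \<open>(m_ij) \<in> GL_2(O_K)\<close> such that after the substitution the
  repeated root of \<open>F_1 mod \<pi>\<close> sits at \<open>(0:1)\<close> (i.e. \<open>(0:1)\<close> is a root of
  multiplicity \<open>\<ge> 3\<close> of the transformed \<open>F_1 mod \<pi>\<close>), apply the substitution to \<open>F\<close>,
  then replace \<open>F(x,z)\<close> by \<open>\<pi>^(-2) F(\<pi> x, z)\<close>.\<close>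
definition bq_step :: "('a::field \<Rightarrow> int) \<Rightarrow> 'a \<Rightarrow> 'a poly \<Rightarrow> 'a poly \<Rightarrow> bool" where
  "bq_step v \<pi> F G \<longleftrightarrow> (\<exists>m11 m12 m21 m22. GL2_O v m11 m12 m21 m22 \<and>
     bq_root_mult_ge v (bq_subst (bq_F1 v \<pi> F) m11 m12 m21 m22) 0 1 3 \<and>
     G = smult (inverse (\<pi>^2)) (bq_subst (bq_subst F m11 m12 m21 m22) \<pi> 0 0 1))"

end

theory Submission
  imports Defs
begin

(*
  Positive level means that the Jacobian y^2 = x^3 + c x^2 + a4 x + a6, with a4 = bd - 4ae and
  a6 = ad^2 + b^2 e - 4ace, has an integral model reached by a change of coordinates with
  v(u) >= 1.  Its shift r is integral, and if char k <> 2 it is a triple root of the cubic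
  modulo pi.  If the coefficient a of F_1 is a unit (possibly after swapping x and z), a
  translation makes b = 0 and the triple root of F_1 can be written down from r; otherwise
  a and e vanish modulo pi and the triple root is (1 : 0) or (0 : 1).  The same congruences
  show that one step of the procedure keeps F integral.

  If F is non-minimal, a discriminant-lowering equivalence in Smith normal form shows that in a
  suitable GL_2(O_K)-frame the coefficient of x^i z^(4-i) has valuation at least
  2m - alpha i, with 1 <= alpha and alpha + 1 <= m.  These bounds place the triple root at
  (0 : 1) of the frame (this settles char k = 2), and one step of the procedure turns lower
  bounds beta_i into beta_i + i - 2; after at most two steps all of them are at least 2.
*)

section \<open>Discrete valuations\<close>

locale dvr =
  fixes v :: "'a::field \<Rightarrow> int" and \<pi> :: 'a
  assumes dv: "discrete_valuation v" and pi_nonzero: "\<pi> \<noteq> 0" and v_pi: "v \<pi> = 1"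
begin

lemma v_mult: "x \<noteq> 0 \<Longrightarrow> y \<noteq> 0 \<Longrightarrow> v (x * y) = v x + v y"
  using dv unfolding discrete_valuation_def by blast

lemma v_add: "x \<noteq> 0 \<Longrightarrow> y \<noteq> 0 \<Longrightarrow> x + y \<noteq> 0 \<Longrightarrow> min (v x) (v y) \<le> v (x + y)"
  using dv unfolding discrete_valuation_def by blast

lemma v_one [simp]: "v 1 = 0"
  using v_mult[of 1 1] by simp

lemma v_inverse: "x \<noteq> 0 \<Longrightarrow> v (inverse x) = - v x"
  using v_mult[of x "inverse x"] by simp

lemma v_minus_one [simp]: "v (-1) = 0"
  using v_mult[of "-1" "-1"] by simp

lemma v_power: "x \<noteq> 0 \<Longrightarrow> v (x ^ n) = int n * v x"
  by (induction n) (auto simp: v_mult algebra_simps)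

lemma v_divide: "x \<noteq> 0 \<Longrightarrow> y \<noteq> 0 \<Longrightarrow> v (x / y) = v x - v y"
  by (simp add: divide_inverse v_mult v_inverse)

lemma v_pi_power [simp]: "v (\<pi> ^ n) = int n"
  using v_power[OF pi_nonzero] v_pi by simp

lemma vge_0 [simp]: "vge v n 0"
  by (simp add: vge_def)

lemma vge_mono: "m \<le> n \<Longrightarrow> vge v n x \<Longrightarrow> vge v m x"
  by (auto simp: vge_def)

lemma v_minus [simp]: "v (- x) = v x"
proof (cases "x = 0")
  case False
  then show ?thesis using v_mult[of "-1" x] by simp
qed simp

lemma vge_minus_iff [simp]: "vge v n (- x) \<longleftrightarrow> vge v n x"
  by (simp add: vge_def)

lemma vge_add: "vge v n x \<Longrightarrow> vge v n y \<Longrightarrow> vge v n (x + y)"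
proof (cases "x = 0 \<or> y = 0 \<or> x + y = 0")
  case False
  then have "min (v x) (v y) \<le> v (x + y)" using v_add by blast
  then show "vge v n x \<Longrightarrow> vge v n y \<Longrightarrow> vge v n (x + y)"
    using False unfolding vge_def by linarith
qed (auto simp: vge_def)

lemma vge_diff: "vge v n x \<Longrightarrow> vge v n y \<Longrightarrow> vge v n (x - y)"
  using vge_add[of n x "- y"] by simp

lemma vge_mult: "vge v n x \<Longrightarrow> vge v m y \<Longrightarrow> vge v (n + m) (x * y)"
  unfolding vge_def by (cases "x = 0 \<or> y = 0") (auto simp: v_mult)

lemma vge_mult_in_O: "vge v n x \<Longrightarrow> in_O v y \<Longrightarrow> vge v n (x * y)"
  using vge_mult[of n x 0 y] by (simp add: in_O_def)

lemma vge_in_O_mult: "in_O v y \<Longrightarrow> vge v n x \<Longrightarrow> vge v n (y * x)"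
  using vge_mult_in_O[of n x y] by (simp add: mult.commute)

lemma vge_power: "vge v n x \<Longrightarrow> vge v (int k * n) (x ^ k)"
proof (induction k)
  case (Suc k)
  then have "vge v (n + int k * n) (x * x ^ k)" using vge_mult by blast
  then show ?case by (simp add: algebra_simps)
qed (simp add: vge_def)

lemma in_O_add: "in_O v x \<Longrightarrow> in_O v y \<Longrightarrow> in_O v (x + y)"
  unfolding in_O_def by (rule vge_add)

lemma in_O_diff: "in_O v x \<Longrightarrow> in_O v y \<Longrightarrow> in_O v (x - y)"
  unfolding in_O_def by (rule vge_diff)

lemma in_O_mult: "in_O v x \<Longrightarrow> in_O v y \<Longrightarrow> in_O v (x * y)"
  unfolding in_O_def using vge_mult[of 0 x 0 y] by simp

lemma in_O_minus: "in_O v x \<Longrightarrow> in_O v (- x)"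
  unfolding in_O_def by simp

lemma in_O_power: "in_O v x \<Longrightarrow> in_O v (x ^ k)"
  using vge_power[of 0 x k] by (simp add: in_O_def)

lemma in_O_1: "in_O v 1"
  by (simp add: in_O_def vge_def)

lemma in_O_0: "in_O v 0"
  by (simp add: in_O_def)

lemma in_O_numeral: "in_O v (numeral n)"
proof -
  have "in_O v (of_nat m)" for m
    by (induction m) (auto intro: in_O_add in_O_1 in_O_0)
  from this[of "numeral n"] show ?thesis by simp
qed

lemma in_O_pi: "in_O v \<pi>"
  by (simp add: in_O_def vge_def v_pi)

lemma vge_0_if_in_O: "in_O v x \<Longrightarrow> vge v 0 x"
  by (simp add: in_O_def)

lemma in_O_if_vge: "0 \<le> n \<Longrightarrow> vge v n x \<Longrightarrow> in_O v x"
  unfolding in_O_def using vge_mono by blast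

lemmas in_O_intros = in_O_add in_O_diff in_O_mult in_O_minus in_O_power in_O_1 in_O_0
  in_O_numeral in_O_pi

lemma vge_1_pi: "vge v 1 \<pi>"
  by (simp add: vge_def v_pi)

lemma vge_pi_power_mult_iff: "vge v (n + int k) (\<pi> ^ k * x) \<longleftrightarrow> vge v n x"
proof (cases "x = 0")
  case False
  have "\<pi> ^ k \<noteq> 0" using pi_nonzero by simp
  then have "v (\<pi> ^ k * x) = int k + v x" using v_mult[of "\<pi> ^ k" x] False by simp
  then show ?thesis using False \<open>\<pi> ^ k \<noteq> 0\<close> unfolding vge_def by auto
qed (simp add: vge_def)

lemma vge_pi_mult_iff: "vge v (n + 1) (\<pi> * x) \<longleftrightarrow> vge v n x"
  using vge_pi_power_mult_iff[of n 1 x] by simp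

text \<open>Units of \<open>O_K\<close> are written as the pair of conditions \<open>in_O v w\<close>, \<open>\<not> vge v 1 w\<close>.\<close>

lemma unit_v_eq_0: "in_O v w \<Longrightarrow> \<not> vge v 1 w \<Longrightarrow> w \<noteq> 0 \<and> v w = 0"
  unfolding in_O_def vge_def by auto

lemma unit_inverse:
  assumes "in_O v w" "\<not> vge v 1 w"
  shows "in_O v (inverse w)"
proof -
  have "w \<noteq> 0" "v w = 0" using unit_v_eq_0[OF assms] by auto
  then show ?thesis by (simp add: in_O_def vge_def v_inverse)
qed

lemma vge_unit_mult_cancel:
  assumes "in_O v w" "\<not> vge v 1 w" "vge v n (w * x)"
  shows "vge v n x"
proof (cases "x = 0")
  case False
  have "w \<noteq> 0" "v w = 0" using unit_v_eq_0[OF assms(1,2)] by auto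
  then have "v (w * x) = v x" using v_mult[of w x] False by simp
  then show ?thesis using assms(3) \<open>w \<noteq> 0\<close> False unfolding vge_def by auto
qed (simp add: vge_def)

lemma unit_mult:
  "in_O v w \<Longrightarrow> \<not> vge v 1 w \<Longrightarrow> in_O v w' \<Longrightarrow> \<not> vge v 1 w' \<Longrightarrow>
    in_O v (w * w') \<and> \<not> vge v 1 (w * w')"
proof -
  assume "in_O v w" "\<not> vge v 1 w" "in_O v w'" "\<not> vge v 1 w'"
  then have "w \<noteq> 0" "v w = 0" "w' \<noteq> 0" "v w' = 0" using unit_v_eq_0 by auto
  then have "v (w * w') = 0" "w * w' \<noteq> 0" using v_mult[of w w'] by auto
  then show ?thesis unfolding in_O_def vge_def by auto
qed

lemma unit_power: "in_O v w \<Longrightarrow> \<not> vge v 1 w \<Longrightarrow> in_O v (w ^ k) \<and> \<not> vge v 1 (w ^ k)"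
proof -
  assume "in_O v w" "\<not> vge v 1 w"
  then have "w \<noteq> 0" "v w = 0" using unit_v_eq_0 by auto
  then have "v (w ^ k) = 0" "w ^ k \<noteq> 0" using v_power[of w k] by auto
  then show ?thesis unfolding in_O_def vge_def by auto
qed

lemma vge_1_of_power: "vge v 1 (x ^ k) \<Longrightarrow> k \<ge> 1 \<Longrightarrow> in_O v x \<Longrightarrow> vge v 1 x"
proof (cases "x = 0")
  case False
  assume "vge v 1 (x ^ k)" "k \<ge> 1" "in_O v x"
  then have "1 \<le> int k * v x" "0 \<le> v x"
    using v_power[OF False, of k] False by (simp_all add: vge_def in_O_def)
  then have "1 \<le> v x" by (cases "v x = 0") auto
  then show ?thesis by (simp add: vge_def)
qed (simp add: vge_def)

lemma in_O_of_square: "in_O v (x ^ 2) \<Longrightarrow> in_O v x"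
proof (cases "x = 0")
  case False
  assume "in_O v (x ^ 2)"
  then have "0 \<le> 2 * v x" using v_power[OF False, of 2] False by (simp add: in_O_def vge_def)
  then show ?thesis by (simp add: in_O_def vge_def)
qed (simp add: in_O_def vge_def)

lemma vge_weaken: "vge v a x \<Longrightarrow> k \<le> a \<Longrightarrow> vge v k x"
  using vge_mono by blast

lemma vge_add_min: "vge v a x \<Longrightarrow> vge v b y \<Longrightarrow> vge v (min a b) (x + y)"
  using vge_add vge_mono by (meson min.cobounded1 min.cobounded2)

lemma vge_diff_min: "vge v a x \<Longrightarrow> vge v b y \<Longrightarrow> vge v (min a b) (x - y)"
  using vge_diff vge_mono by (meson min.cobounded1 min.cobounded2)

lemma vge_numeral: "vge v 0 (numeral n)"
  using in_O_numeral by (simp add: in_O_def)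

text \<open>The rules \<open>vge_bound_rules\<close> compute, after \<open>rule vge_weaken\<close>, a lower bound for the valuation
  of a polynomial expression from bounds on its atoms; \<open>simp\<close> then checks the resulting integer
  inequality.\<close>
lemmas vge_bound_rules = vge_add_min vge_diff_min vge_minus_iff[THEN iffD2] vge_mult vge_power
  vge_numeral

end

section \<open>Substitutions into binary quartics\<close>

text \<open>A \<open>2\<times>2\<close> matrix \<open>(A, B, C, D)\<close> is \<open>[[A, B], [C, D]]\<close>; it acts on quartics by
  \<open>F(x, z) \<mapsto> F(A x + B z, C x + D z)\<close>, so that substituting \<open>S\<close> and then \<open>T\<close> is substituting
  the product \<open>S T\<close>.\<close>

type_synonym 'a mat2 = "'a \<times> 'a \<times> 'a \<times> 'a"

fun mat_subst :: "'a::field poly \<Rightarrow> 'a mat2 \<Rightarrow> 'a poly" where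
  "mat_subst F (A, B, C, D) = bq_subst F A C B D"

declare mat_subst.simps [simp del]

fun mat_mult :: "'a::field mat2 \<Rightarrow> 'a mat2 \<Rightarrow> 'a mat2" where
  "mat_mult (A, B, C, D) (A', B', C', D') =
     (A*A' + B*C', A*B' + B*D', C*A' + D*C', C*B' + D*D')"

fun mat_det :: "'a::field mat2 \<Rightarrow> 'a" where
  "mat_det (A, B, C, D) = A*D - B*C"

fun mat_inv :: "'a::field mat2 \<Rightarrow> 'a mat2" where
  "mat_inv (A, B, C, D) =
     (D / (A*D - B*C), - B / (A*D - B*C), - C / (A*D - B*C), A / (A*D - B*C))"

fun mat_scale :: "'a::field \<Rightarrow> 'a mat2 \<Rightarrow> 'a mat2" where
  "mat_scale l (A, B, C, D) = (l*A, l*B, l*C, l*D)"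

definition quartic :: "'a::field \<Rightarrow> 'a \<Rightarrow> 'a \<Rightarrow> 'a \<Rightarrow> 'a \<Rightarrow> 'a poly" where
  "quartic e d c b a = [:e, d, c, b, a:]"

lemma coeff_quartic:
  "coeff (quartic e d c b a) 0 = e" "coeff (quartic e d c b a) 1 = d"
  "coeff (quartic e d c b a) 2 = c" "coeff (quartic e d c b a) 3 = b"
  "coeff (quartic e d c b a) 4 = a" "i > 4 \<Longrightarrow> coeff (quartic e d c b a) i = 0"
  by (auto simp: quartic_def coeff_pCons numeral_eq_Suc split: nat.splits)

lemma le_4_cases: "i \<le> (4::nat) \<Longrightarrow> i = 0 \<or> i = 1 \<or> i = 2 \<or> i = 3 \<or> i = 4"
  by auto

lemma degree_quartic: "degree (quartic e d c b a) \<le> 4"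
  by (rule degree_le) (simp add: coeff_quartic)

lemma quartic_coeffs:
  assumes "degree F \<le> 4"
  shows "F = quartic (coeff F 0) (coeff F 1) (coeff F 2) (coeff F 3) (coeff F 4)"
proof (rule poly_eqI)
  fix n
  show "coeff F n = coeff (quartic (coeff F 0) (coeff F 1) (coeff F 2) (coeff F 3) (coeff F 4)) n"
  proof (cases "n > 4")
    case True
    then show ?thesis using assms by (simp add: coeff_quartic coeff_eq_0)
  next
    case False
    then have "n = 0 \<or> n = 1 \<or> n = 2 \<or> n = 3 \<or> n = 4" by auto
    then show ?thesis by (elim disjE) (simp_all only: coeff_quartic)
  qed
qed

lemma quartic_diff:
  "quartic e d c b a - quartic e' d' c' b' a' = quartic (e-e') (d-d') (c-c') (b-b') (a-a')"
  by (simp add: quartic_def)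

lemma smult_quartic: "smult k (quartic e d c b a) = quartic (k*e) (k*d) (k*c) (k*b) (k*a)"
  by (simp add: quartic_def)

definition "subst_coeff0 e d c b a A B C D = e*D^4 + d*B*D^3 + c*B^2*D^2 + b*B^3*D + a*B^4"
definition "subst_coeff1 e d c b a A B C D = e*4*C*D^3 + d*(A*D^3 + 3*B*C*D^2)
  + c*(2*A*B*D^2 + 2*B^2*C*D) + b*(3*A*B^2*D + B^3*C) + a*4*A*B^3"
definition "subst_coeff2 e d c b a A B C D = e*6*C^2*D^2 + d*(3*A*C*D^2 + 3*B*C^2*D)
  + c*(A^2*D^2 + 4*A*B*C*D + B^2*C^2) + b*(3*A^2*B*D + 3*A*B^2*C) + a*6*A^2*B^2"
definition "subst_coeff3 e d c b a A B C D = e*4*C^3*D + d*(3*A*C^2*D + B*C^3)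
  + c*(2*A^2*C*D + 2*A*B*C^2) + b*(A^3*D + 3*A^2*B*C) + a*4*A^3*B"
definition "subst_coeff4 e d c b a A B C D = e*C^4 + d*A*C^3 + c*A^2*C^2 + b*A^3*C + a*A^4"

lemmas subst_coeff_defs =
  subst_coeff0_def subst_coeff1_def subst_coeff2_def subst_coeff3_def subst_coeff4_def

lemma mat_subst_eq_quartic:
  fixes F :: "'a::field poly"
  shows "mat_subst F (A, B, C, D) = quartic
     (subst_coeff0 (coeff F 0) (coeff F 1) (coeff F 2) (coeff F 3) (coeff F 4) A B C D)
     (subst_coeff1 (coeff F 0) (coeff F 1) (coeff F 2) (coeff F 3) (coeff F 4) A B C D)
     (subst_coeff2 (coeff F 0) (coeff F 1) (coeff F 2) (coeff F 3) (coeff F 4) A B C D)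
     (subst_coeff3 (coeff F 0) (coeff F 1) (coeff F 2) (coeff F 3) (coeff F 4) A B C D)
     (subst_coeff4 (coeff F 0) (coeff F 1) (coeff F 2) (coeff F 3) (coeff F 4) A B C D)"
  unfolding mat_subst.simps bq_subst_def quartic_def subst_coeff_defs
  by (simp add: atMost_Suc numeral_eq_Suc algebra_simps power2_eq_square power3_eq_cube)

lemma mat_subst_quartic:
  "mat_subst (quartic e d c b a) (A, B, C, D) = quartic (subst_coeff0 e d c b a A B C D)
     (subst_coeff1 e d c b a A B C D) (subst_coeff2 e d c b a A B C D)
     (subst_coeff3 e d c b a A B C D) (subst_coeff4 e d c b a A B C D)"
  by (simp only: mat_subst_eq_quartic coeff_quartic)

lemma coeff_mat_subst:
  "coeff (mat_subst F (A, B, C, D)) 0 =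
     subst_coeff0 (coeff F 0) (coeff F 1) (coeff F 2) (coeff F 3) (coeff F 4) A B C D"
  "coeff (mat_subst F (A, B, C, D)) 1 =
     subst_coeff1 (coeff F 0) (coeff F 1) (coeff F 2) (coeff F 3) (coeff F 4) A B C D"
  "coeff (mat_subst F (A, B, C, D)) 2 =
     subst_coeff2 (coeff F 0) (coeff F 1) (coeff F 2) (coeff F 3) (coeff F 4) A B C D"
  "coeff (mat_subst F (A, B, C, D)) 3 =
     subst_coeff3 (coeff F 0) (coeff F 1) (coeff F 2) (coeff F 3) (coeff F 4) A B C D"
  "coeff (mat_subst F (A, B, C, D)) 4 =
     subst_coeff4 (coeff F 0) (coeff F 1) (coeff F 2) (coeff F 3) (coeff F 4) A B C D"
  by (simp_all only: mat_subst_eq_quartic coeff_quartic)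

lemma degree_mat_subst: "degree (mat_subst F S) \<le> 4"
  by (cases S) (simp only: mat_subst_eq_quartic degree_quartic)

lemma mat_subst_mult: "mat_subst (mat_subst F S) T = mat_subst F (mat_mult S T)"
proof -
  obtain A B C D where S: "S = (A, B, C, D)" by (cases S) auto
  obtain A' B' C' D' where T: "T = (A', B', C', D')" by (cases T) auto
  show ?thesis unfolding S T mat_mult.simps mat_subst_eq_quartic[of F] mat_subst_quartic
    unfolding quartic_def subst_coeff_defs
    by (simp only: pCons_eq_iff) algebra
qed

lemma mat_subst_id: "degree F \<le> 4 \<Longrightarrow> mat_subst F (1, 0, 0, 1) = F"
  by (subst (2) quartic_coeffs) (simp_all only: mat_subst_eq_quartic, simp add: subst_coeff_defs)

lemma mat_subst_diff: "mat_subst (F - G) S = mat_subst F S - mat_subst G S"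
  by (cases S) (simp only: mat_subst_eq_quartic quartic_diff coeff_diff,
      simp add: subst_coeff_defs algebra_simps)

lemma mat_subst_smult: "mat_subst (smult k F) S = smult k (mat_subst F S)"
  by (cases S) (simp only: mat_subst_eq_quartic smult_quartic coeff_smult,
      simp add: subst_coeff_defs algebra_simps)

lemma mat_subst_scale: "mat_subst F (mat_scale l S) = smult (l^4) (mat_subst F S)"
proof -
  obtain A B C D where S: "S = (A, B, C, D)" by (cases S) auto
  show ?thesis unfolding S mat_scale.simps mat_subst_eq_quartic smult_quartic
    unfolding subst_coeff_defs quartic_def
    by (simp only: pCons_eq_iff) algebra
qed

lemma coeff_mat_subst_diag_right:
  "i \<le> 4 \<Longrightarrow> coeff (mat_subst P (1, 0, 0, \<delta>)) i = coeff P i * \<delta>^(4 - i)"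
  by (drule le_4_cases, elim disjE; simp only: coeff_mat_subst; simp add: subst_coeff_defs)

lemma coeff_mat_subst_diag_left:
  "i \<le> 4 \<Longrightarrow> coeff (mat_subst P (\<delta>, 0, 0, 1)) i = coeff P i * \<delta>^i"
  by (drule le_4_cases, elim disjE; simp only: coeff_mat_subst; simp add: subst_coeff_defs)

lemma coeff_mat_subst_swap: "i \<le> 4 \<Longrightarrow> coeff (mat_subst P (0, 1, 1, 0)) i = coeff P (4 - i)"
  by (drule le_4_cases, elim disjE; simp only: coeff_mat_subst; simp add: subst_coeff_defs)

lemma mat_mult_assoc: "mat_mult (mat_mult S T) R = mat_mult S (mat_mult T R)"
  by (cases S; cases T; cases R) (simp add: algebra_simps)

lemma mat_mult_1_left: "mat_mult (1, 0, 0, 1) S = S"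
  by (cases S) simp

lemma mat_det_mult: "mat_det (mat_mult S T) = mat_det S * mat_det T"
  by (cases S; cases T) (simp add: algebra_simps)

lemma mat_det_scale: "mat_det (mat_scale l S) = l^2 * mat_det S"
  by (cases S) (simp add: algebra_simps power2_eq_square)

lemma mat_inv_eq:
  assumes "mat_det S \<noteq> 0"
  obtains A B C D d where "S = (A, B, C, D)" "d = A*D - B*C" "d \<noteq> 0"
    "mat_inv S = (D/d, -B/d, -C/d, A/d)"
  using assms by (cases S) auto

lemma mat_mult_inv:
  assumes "mat_det S \<noteq> 0"
  shows "mat_mult S (mat_inv S) = (1, 0, 0, 1)"
proof -
  obtain A B C D d where e: "S = (A, B, C, D)" "d = A*D - B*C" "d \<noteq> 0"
    "mat_inv S = (D/d, -B/d, -C/d, A/d)" using mat_inv_eq[OF assms] by blast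
  have "A*(D/d) + B*(-C/d) = d/d" "C*(D/d) + D*(-C/d) = 0" "A*(-B/d) + B*(A/d) = 0"
    "C*(-B/d) + D*(A/d) = d/d"
    using e(2,3) by (simp_all add: field_simps)
  then show ?thesis using e by simp
qed

lemma mat_det_inv:
  assumes "mat_det S \<noteq> 0"
  shows "mat_det (mat_inv S) = inverse (mat_det S)"
proof -
  obtain A B C D d where e: "S = (A, B, C, D)" "d = A*D - B*C" "d \<noteq> 0"
    "mat_inv S = (D/d, -B/d, -C/d, A/d)" using mat_inv_eq[OF assms] by blast
  have "D/d*(A/d) - (-B/d)*(-C/d) = (A*D - B*C)/(d*d)" using e(3) by (simp add: field_simps)
  also have "\<dots> = inverse d" using e(3) by (simp add: field_simps) (simp add: e(2) algebra_simps)
  finally show ?thesis using e by simp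
qed

lemma mat_subst_inv: "degree F \<le> 4 \<Longrightarrow> mat_det S \<noteq> 0 \<Longrightarrow> mat_subst (mat_subst F S) (mat_inv S) = F"
  using mat_subst_mult[of F S "mat_inv S"] mat_mult_inv[of S] mat_subst_id[of F] by simp

lemma mat_subst_nonzero:
  assumes "degree F \<le> 4" "mat_det S \<noteq> 0" "F \<noteq> 0"
  shows "mat_subst F S \<noteq> 0"
proof
  assume "mat_subst F S = 0"
  then have "mat_subst 0 (mat_inv S) = F" using mat_subst_inv[OF assms(1,2)] by simp
  then show False using assms(3) by (cases "mat_inv S") (simp add: mat_subst.simps bq_subst_def)
qed

context dvr
begin

fun in_GL2_O :: "'a mat2 \<Rightarrow> bool" where
  "in_GL2_O (A, B, C, D) \<longleftrightarrow>
     in_O v A \<and> in_O v B \<and> in_O v C \<and> in_O v D \<and> \<not> vge v 1 (A*D - B*C)"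

lemma GL2_O_iff_in_GL2_O: "GL2_O v m11 m12 m21 m22 \<longleftrightarrow> in_GL2_O (m11, m21, m12, m22)"
proof
  assume "GL2_O v m11 m12 m21 m22"
  then show "in_GL2_O (m11, m21, m12, m22)" by (auto simp: GL2_O_def vge_def mult.commute)
next
  assume a: "in_GL2_O (m11, m21, m12, m22)"
  then have "in_O v (m11 * m22 - m21 * m12)" by (auto intro!: in_O_intros)
  then have "m11 * m22 - m21 * m12 \<noteq> 0 \<and> v (m11 * m22 - m21 * m12) = 0"
    using a unit_v_eq_0 by auto
  then show "GL2_O v m11 m12 m21 m22" using a by (auto simp: GL2_O_def mult.commute)
qed

lemma in_GL2_O_det: "in_GL2_O S \<Longrightarrow> in_O v (mat_det S) \<and> \<not> vge v 1 (mat_det S)"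
  by (cases S) (auto intro!: in_O_intros)

lemma in_GL2_O_det_nonzero: "in_GL2_O S \<Longrightarrow> mat_det S \<noteq> 0"
  using in_GL2_O_det by (auto simp: vge_def)

lemma in_GL2_O_inv:
  assumes g: "in_GL2_O S"
  shows "in_GL2_O (mat_inv S)"
proof -
  have d0: "mat_det S \<noteq> 0" using g in_GL2_O_det_nonzero by blast
  then obtain A B C D d where e: "S = (A, B, C, D)" "d = A*D - B*C" "d \<noteq> 0"
    "mat_inv S = (D/d, -B/d, -C/d, A/d)"
    using mat_inv_eq by blast
  have u: "in_O v d" "\<not> vge v 1 d" using g e in_GL2_O_det by auto
  then have ui: "in_O v (inverse d)" using unit_inverse by blast
  have ent: "in_O v A" "in_O v B" "in_O v C" "in_O v D" using g e by auto
  have "mat_det (mat_inv S) = inverse d" using mat_det_inv[OF d0] e by simp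
  then have dm: "D/d*(A/d) - (-B/d)*(-C/d) = inverse d" using e by simp
  have "\<not> vge v 1 (inverse d)"
    using unit_v_eq_0[OF u] by (auto simp: vge_def v_inverse)
  then show ?thesis unfolding e(4) in_GL2_O.simps dm using ent ui
    by (simp add: divide_inverse in_O_intros)
qed

lemma in_GL2_O_mult:
  assumes g: "in_GL2_O S" "in_GL2_O T"
  shows "in_GL2_O (mat_mult S T)"
proof -
  obtain A B C D where S: "S = (A, B, C, D)" by (cases S) auto
  obtain A' B' C' D' where T: "T = (A', B', C', D')" by (cases T) auto
  have "in_O v (mat_det S) \<and> \<not> vge v 1 (mat_det S)" "in_O v (mat_det T) \<and> \<not> vge v 1 (mat_det T)"
    using g in_GL2_O_det by auto
  then have "\<not> vge v 1 (mat_det (mat_mult S T))" using unit_mult mat_det_mult by metis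
  then have "\<not> vge v 1 ((A*A' + B*C') * (C*B' + D*D') - (A*B' + B*D') * (C*A' + D*C'))"
    using S T by simp
  then show ?thesis unfolding S T mat_mult.simps in_GL2_O.simps using g S T
    by (auto intro!: in_O_intros)
qed

lemma in_GL2_O_swap: "in_GL2_O (0, 1, 1, 0)"
  by (simp add: in_O_intros vge_def)

definition vge_poly :: "int \<Rightarrow> 'a poly \<Rightarrow> bool" where
  "vge_poly n F \<longleftrightarrow> (\<forall>i. vge v n (coeff F i))"

lemma bq_integral_iff_vge_poly: "bq_integral v F \<longleftrightarrow> vge_poly 0 F"
  by (simp add: bq_integral_def in_O_def vge_poly_def)

lemma vge_poly_coeff: "vge_poly n F \<Longrightarrow> vge v n (coeff F i)"
  by (simp add: vge_poly_def)

lemma vge_polyI: "(\<And>i. i \<le> 4 \<Longrightarrow> vge v n (coeff P i)) \<Longrightarrow> degree P \<le> 4 \<Longrightarrow> vge_poly n P"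
  unfolding vge_poly_def by (metis coeff_eq_0 le_less_linear order.trans vge_0)

lemma vge_poly_quartic:
  "vge_poly n (quartic e d c b a) \<longleftrightarrow> vge v n e \<and> vge v n d \<and> vge v n c \<and> vge v n b \<and> vge v n a"
proof
  assume "vge_poly n (quartic e d c b a)"
  then show "vge v n e \<and> vge v n d \<and> vge v n c \<and> vge v n b \<and> vge v n a"
    unfolding vge_poly_def using coeff_quartic(1-5)[of e d c b a] by metis
next
  assume "vge v n e \<and> vge v n d \<and> vge v n c \<and> vge v n b \<and> vge v n a"
  then show "vge_poly n (quartic e d c b a)"
  proof (intro vge_polyI degree_quartic)
    fix i :: nat
    assume "i \<le> 4"
    then have "i = 0 \<or> i = 1 \<or> i = 2 \<or> i = 3 \<or> i = 4" by auto
    then show "vge v n (coeff (quartic e d c b a) i)"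
      using \<open>vge v n e \<and> vge v n d \<and> vge v n c \<and> vge v n b \<and> vge v n a\<close>
      by (elim disjE) (simp_all only: coeff_quartic)
  qed
qed

lemma vge_poly_mat_subst:
  assumes "vge_poly n F" "in_O v A" "in_O v B" "in_O v C" "in_O v D"
  shows "vge_poly n (mat_subst F (A, B, C, D))"
  unfolding mat_subst_eq_quartic vge_poly_quartic subst_coeff_defs
  using assms
  by (intro conjI vge_add vge_diff vge_mult_in_O vge_in_O_mult in_O_intros vge_poly_coeff
      | assumption)+

lemma vge_poly_mat_subst_GL2_O: "in_GL2_O S \<Longrightarrow> vge_poly n F \<Longrightarrow> vge_poly n (mat_subst F S)"
  by (cases S) (metis in_GL2_O.simps vge_poly_mat_subst)

lemma vge_poly_mat_subst_iff:
  "in_GL2_O S \<Longrightarrow> degree F \<le> 4 \<Longrightarrow> vge_poly n (mat_subst F S) \<longleftrightarrow> vge_poly n F"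
  using vge_poly_mat_subst_GL2_O[of S] vge_poly_mat_subst_GL2_O[of "mat_inv S"]
    in_GL2_O_inv mat_subst_inv in_GL2_O_det_nonzero by metis

end

section \<open>The Jacobian under equivalence\<close>

fun w_iso_by :: "'a::field \<Rightarrow> 'a \<Rightarrow> 'a \<Rightarrow> 'a \<Rightarrow> 'a weierstrass \<Rightarrow> 'a weierstrass \<Rightarrow> bool" where
  "w_iso_by u r s t (a1, a2, a3, a4, a6) (a1', a2', a3', a4', a6') \<longleftrightarrow>
     u * a1' = a1 + 2*s \<and>
     u^2 * a2' = a2 - s*a1 + 3*r - s^2 \<and>
     u^3 * a3' = a3 + r*a1 + 2*t \<and>
     u^4 * a4' = a4 - s*a3 + 2*r*a2 - (t + r*s)*a1 + 3*r^2 - 2*s*t \<and>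
     u^6 * a6' = a6 + r*a4 + r^2*a2 + r^3 - t*a3 - t^2 - r*t*a1"

lemma w_iso_iff: "w_iso W W' \<longleftrightarrow> (\<exists>u r s t. u \<noteq> 0 \<and> w_iso_by u r s t W W')"
  by (cases W; cases W') (simp add: w_iso_def)

lemma w_iso_by_refl: "w_iso_by 1 0 0 0 W W"
  by (cases W) simp

lemma w_iso_by_trans:
  assumes "w_iso_by u1 r1 s1 t1 W1 W2" "w_iso_by u2 r2 s2 t2 W2 W3"
  shows "w_iso_by (u1*u2) (r1 + u1^2*r2) (s1 + u1*s2) (t1 + u1^2*s1*r2 + u1^3*t2) W1 W3"
proof -
  obtain a1 a2 a3 a4 a6 where 1: "W1 = (a1, a2, a3, a4, a6)" by (cases W1) auto
  obtain b1 b2 b3 b4 b6 where 2: "W2 = (b1, b2, b3, b4, b6)" by (cases W2) auto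
  obtain c1 c2 c3 c4 c6 where 3: "W3 = (c1, c2, c3, c4, c6)" by (cases W3) auto
  have h1: "u1 * b1 = a1 + 2*s1" "u1^2 * b2 = a2 - s1*a1 + 3*r1 - s1^2"
    "u1^3 * b3 = a3 + r1*a1 + 2*t1"
    "u1^4 * b4 = a4 - s1*a3 + 2*r1*a2 - (t1 + r1*s1)*a1 + 3*r1^2 - 2*s1*t1"
    "u1^6 * b6 = a6 + r1*a4 + r1^2*a2 + r1^3 - t1*a3 - t1^2 - r1*t1*a1"
    using assms(1) 1 2 by simp_all
  have h2: "u2 * c1 = b1 + 2*s2" "u2^2 * c2 = b2 - s2*b1 + 3*r2 - s2^2"
    "u2^3 * c3 = b3 + r2*b1 + 2*t2"
    "u2^4 * c4 = b4 - s2*b3 + 2*r2*b2 - (t2 + r2*s2)*b1 + 3*r2^2 - 2*s2*t2"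
    "u2^6 * c6 = b6 + r2*b4 + r2^2*b2 + r2^3 - t2*b3 - t2^2 - r2*t2*b1"
    using assms(2) 2 3 by simp_all
  show ?thesis unfolding 1 3 w_iso_by.simps
    apply (intro conjI)
    using h1 h2 by algebra+
qed

lemma w_iso_by_sym:
  assumes "w_iso_by u r s t W1 W2" "u \<noteq> 0"
  shows "w_iso_by (inverse u) (- r / u^2) (- s / u) ((r*s - t) / u^3) W2 W1"
proof -
  obtain a1 a2 a3 a4 a6 where 1: "W1 = (a1, a2, a3, a4, a6)" by (cases W1) auto
  obtain b1 b2 b3 b4 b6 where 2: "W2 = (b1, b2, b3, b4, b6)" by (cases W2) auto
  define ui where "ui = inverse u"
  have ui: "u * ui = 1" using assms(2) ui_def by simp
  have e: "- r / u^2 = - r * ui^2" "- s / u = - s * ui" "(r*s - t) / u^3 = (r*s - t) * ui^3"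
    using ui_def by (simp_all add: divide_inverse power_inverse)
  have h: "a1 = u * b1 - 2*s" "a2 = u^2 * b2 + s*a1 - 3*r + s^2" "a3 = u^3 * b3 - r*a1 - 2*t"
    "a4 = u^4 * b4 + s*a3 - 2*r*a2 + (t + r*s)*a1 - 3*r^2 + 2*s*t"
    "a6 = u^6 * b6 - r*a4 - r^2*a2 - r^3 + t*a3 + t^2 + r*t*a1"
    using assms(1) 1 2 by (simp_all add: algebra_simps)
  show ?thesis unfolding 1 2 w_iso_by.simps e ui_def[symmetric]
    unfolding h(5) h(4) h(3) h(2) h(1)
    apply (intro conjI)
    using ui by algebra+
qed

lemma w_disc_w_iso_by:
  assumes "w_iso_by u r s t W W'"
  shows "w_disc W = u^12 * w_disc W'"
proof -
  obtain a1 a2 a3 a4 a6 where 1: "W = (a1, a2, a3, a4, a6)" by (cases W) auto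
  obtain b1 b2 b3 b4 b6 where 2: "W' = (b1, b2, b3, b4, b6)" by (cases W') auto
  have h: "a1 = u * b1 - 2*s" "a2 = u^2 * b2 + s*a1 - 3*r + s^2" "a3 = u^3 * b3 - r*a1 - 2*t"
    "a4 = u^4 * b4 + s*a3 - 2*r*a2 + (t + r*s)*a1 - 3*r^2 + 2*s*t"
    "a6 = u^6 * b6 - r*a4 - r^2*a2 - r^3 + t*a3 + t^2 + r*t*a1"
    using assms 1 2 by (simp_all add: algebra_simps)
  define x2 where "x2 = a1^2 + 4*a2"
  define x4 where "x4 = 2*a4 + a1*a3"
  define x6 where "x6 = a3^2 + 4*a6"
  define x8 where "x8 = a1^2*a6 + 4*a2*a6 - a1*a3*a4 + a2*a3^2 - a4^2"
  define y2 where "y2 = b1^2 + 4*b2"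
  define y4 where "y4 = 2*b4 + b1*b3"
  define y6 where "y6 = b3^2 + 4*b6"
  define y8 where "y8 = b1^2*b6 + 4*b2*b6 - b1*b3*b4 + b2*b3^2 - b4^2"
  have r2: "u^2 * y2 = x2 + 12*r" unfolding x2_def y2_def using h by algebra
  have r4: "u^4 * y4 = x4 + r*x2 + 6*r^2" unfolding x2_def x4_def y4_def using h by algebra
  have r6: "u^6 * y6 = x6 + 2*r*x4 + r^2*x2 + 4*r^3"
    unfolding x2_def x4_def x6_def y6_def using h by algebra
  have r8: "u^8 * y8 = x8 + 3*r*x6 + 3*r^2*x4 + r^3*x2 + 3*r^4"
    unfolding x2_def x4_def x6_def x8_def y8_def using h by algebra
  have q: "4*x8 = x2*x6 - x4^2" unfolding x2_def x4_def x6_def x8_def by algebra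
  have "- (x2^2*x8) - 8*x4^3 - 27*x6^2 + 9*x2*x4*x6
        = u^12 * (- (y2^2*y8) - 8*y4^3 - 27*y6^2 + 9*y2*y4*y6)"
    using r2 r4 r6 r8 q by algebra
  moreover have "w_disc W = - (x2^2*x8) - 8*x4^3 - 27*x6^2 + 9*x2*x4*x6"
    unfolding 1 w_disc_def Let_def x2_def x4_def x6_def x8_def by (simp only: prod.case)
  moreover have "w_disc W' = - (y2^2*y8) - 8*y4^3 - 27*y6^2 + 9*y2*y4*y6"
    unfolding 2 w_disc_def Let_def y2_def y4_def y6_def y8_def by (simp only: prod.case)
  ultimately show ?thesis by simp
qed

lemma min_disc_val_w_iso:
  assumes "w_iso W W'"
  shows "min_disc_val v W = min_disc_val v W'"
proof -
  obtain u r s t where a: "u \<noteq> 0" "w_iso_by u r s t W W'" using assms w_iso_iff by blast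
  have sym: "w_iso_by (inverse u) (- r / u^2) (- s / u) ((r*s - t) / u^3) W' W"
    using w_iso_by_sym a by blast
  have eq: "w_iso W W'' \<longleftrightarrow> w_iso W' W''" for W''
  proof
    assume "w_iso W W''"
    then obtain u2 r2 s2 t2 where b: "u2 \<noteq> 0" "w_iso_by u2 r2 s2 t2 W W''" using w_iso_iff by blast
    have "inverse u * u2 \<noteq> 0" using a b by simp
    then show "w_iso W' W''" unfolding w_iso_iff using w_iso_by_trans[OF sym b(2)] by blast
  next
    assume "w_iso W' W''"
    then obtain u2 r2 s2 t2 where b: "u2 \<noteq> 0" "w_iso_by u2 r2 s2 t2 W' W''" using w_iso_iff by blast
    have "u * u2 \<noteq> 0" using a b by simp
    then show "w_iso W W''" unfolding w_iso_iff using w_iso_by_trans[OF a(2) b(2)] by blast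
  qed
  show ?thesis unfolding min_disc_val_def by (simp only: eq)
qed

definition jac_a4 :: "'a::field poly \<Rightarrow> 'a" where
  "jac_a4 F = coeff F 3 * coeff F 1 - 4 * coeff F 4 * coeff F 0"

definition jac_a6 :: "'a::field poly \<Rightarrow> 'a" where
  "jac_a6 F = coeff F 4 * (coeff F 1)^2 + (coeff F 3)^2 * coeff F 0
     - 4 * coeff F 4 * coeff F 2 * coeff F 0"

lemma bq_jacobian_eq: "bq_jacobian F = (0, coeff F 2, 0, jac_a4 F, jac_a6 F)"
  by (simp add: bq_jacobian_def bq_a_def bq_b_def bq_c_def bq_d_def bq_e_def jac_a4_def
      jac_a6_def Let_def)

lemma bq_disc_eq_w_disc: "bq_disc F = w_disc (bq_jacobian F)"
  unfolding bq_disc_def w_disc_def bq_jacobian_def Let_def by simp algebra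

text \<open>Substituting \<open>S\<close> into a quartic changes its Jacobian by an isomorphism with
  \<open>u = det S\<^sup>-\<^sup>1\<close>.  It suffices to check this for shears and diagonal matrices, which generate
  \<open>GL\<^sub>2(K)\<close>.\<close>

definition jacobian_covariant :: "'a::field mat2 \<Rightarrow> bool" where
  "jacobian_covariant S \<longleftrightarrow> mat_det S \<noteq> 0 \<and>
     (\<forall>F. \<exists>r s t. w_iso_by (inverse (mat_det S)) r s t (bq_jacobian F)
                   (bq_jacobian (mat_subst F S)))"

lemma jacobian_covariant_shear_upper: "jacobian_covariant (1, t, 0, 1)"
  unfolding jacobian_covariant_def
proof (intro conjI allI)
  fix F :: "'a poly"
  show "\<exists>r s t'. w_iso_by (inverse (mat_det (1, t, 0, 1))) r s t' (bq_jacobian F)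
                  (bq_jacobian (mat_subst F (1, t, 0, 1)))"
    apply (rule exI[of _ "coeff F 3 * t + 2 * coeff F 4 * t^2"], rule exI[of _ 0], rule exI[of _ 0])
    unfolding bq_jacobian_eq jac_a4_def jac_a6_def coeff_mat_subst subst_coeff_defs
    by (simp; intro conjI; algebra)
qed simp

lemma jacobian_covariant_shear_lower: "jacobian_covariant (1, 0, t, 1)"
  unfolding jacobian_covariant_def
proof (intro conjI allI)
  fix F :: "'a poly"
  show "\<exists>r s t'. w_iso_by (inverse (mat_det (1, 0, t, 1))) r s t' (bq_jacobian F)
                  (bq_jacobian (mat_subst F (1, 0, t, 1)))"
    apply (rule exI[of _ "coeff F 1 * t + 2 * coeff F 0 * t^2"], rule exI[of _ 0], rule exI[of _ 0])
    unfolding bq_jacobian_eq jac_a4_def jac_a6_def coeff_mat_subst subst_coeff_defs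
    by (simp; intro conjI; algebra)
qed simp

lemma jacobian_covariant_diag:
  assumes "\<alpha> \<noteq> 0" "\<delta> \<noteq> 0"
  shows "jacobian_covariant (\<alpha>, 0, 0, \<delta>)"
  unfolding jacobian_covariant_def
proof (intro conjI allI)
  fix F :: "'a poly"
  define ui where "ui = inverse (\<alpha> * \<delta>)"
  have ui: "\<alpha> * \<delta> * ui = 1" using assms ui_def by (simp add: field_simps)
  have det: "mat_det (\<alpha>, 0, 0, \<delta>) = \<alpha> * \<delta>" by simp
  show "\<exists>r s t. w_iso_by (inverse (mat_det (\<alpha>, 0, 0, \<delta>))) r s t (bq_jacobian F)
                  (bq_jacobian (mat_subst F (\<alpha>, 0, 0, \<delta>)))"
    apply (rule exI[of _ 0], rule exI[of _ 0], rule exI[of _ 0])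
    unfolding bq_jacobian_eq jac_a4_def jac_a6_def coeff_mat_subst det ui_def[symmetric]
      w_iso_by.simps subst_coeff_defs
    apply (intro conjI)
    apply (simp_all add: power_zero_numeral)
    using ui by algebra+
qed (use assms in simp)

lemma jacobian_covariant_mult:
  assumes "jacobian_covariant S" "jacobian_covariant T"
  shows "jacobian_covariant (mat_mult S T)"
  unfolding jacobian_covariant_def
proof (intro conjI allI)
  show "mat_det (mat_mult S T) \<noteq> 0"
    using assms by (simp add: jacobian_covariant_def mat_det_mult del: mat_det.simps)
  fix F :: "'a poly"
  obtain r1 s1 t1 where 1: "w_iso_by (inverse (mat_det S)) r1 s1 t1 (bq_jacobian F)
      (bq_jacobian (mat_subst F S))"
    using assms(1) jacobian_covariant_def by blast
  obtain r2 s2 t2 where 2: "w_iso_by (inverse (mat_det T)) r2 s2 t2 (bq_jacobian (mat_subst F S))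
      (bq_jacobian (mat_subst (mat_subst F S) T))"
    using assms(2) jacobian_covariant_def by blast
  have "inverse (mat_det S) * inverse (mat_det T) = inverse (mat_det (mat_mult S T))"
    by (simp add: mat_det_mult del: mat_det.simps)
  then show "\<exists>r s t. w_iso_by (inverse (mat_det (mat_mult S T))) r s t (bq_jacobian F)
      (bq_jacobian (mat_subst F (mat_mult S T)))"
    using w_iso_by_trans[OF 1 2] unfolding mat_subst_mult by metis
qed

lemma jacobian_covariant_if_det_nonzero:
  assumes "mat_det S \<noteq> 0"
  shows "jacobian_covariant S"
proof -
  have LDU: "jacobian_covariant (A, B, C, D)" if "A \<noteq> 0" "A*D - B*C \<noteq> 0" for A B C D :: 'a
  proof -
    have "C * B / A + (A * D - B * C) / A = D" using that(1) by (simp add: field_simps)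
    then have "(A, B, C, D) =
        mat_mult (mat_mult (1, 0, C/A, 1) (A, 0, 0, (A*D - B*C)/A)) (1, B/A, 0, 1)"
      using that(1) by simp
    moreover have "jacobian_covariant
        (mat_mult (mat_mult (1, 0, C/A, 1) (A, 0, 0, (A*D - B*C)/A)) (1, B/A, 0, 1))"
      using that by (intro jacobian_covariant_mult jacobian_covariant_diag
          jacobian_covariant_shear_upper jacobian_covariant_shear_lower) auto
    ultimately show ?thesis by metis
  qed
  obtain A B C D where S: "S = (A, B, C, D)" by (cases S) auto
  show ?thesis
  proof (cases "A = 0")
    case True
    then have "C \<noteq> 0" "B \<noteq> 0" using assms S by auto
    have "S = mat_mult (1, 1, 0, 1) (-C, B - D, C, D)" using S True by simp
    moreover have "jacobian_covariant (-C, B - D, C, D)"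
      using LDU[where A = "-C" and B = "B - D" and C = C and D = D] \<open>C \<noteq> 0\<close> \<open>B \<noteq> 0\<close>
      by (simp add: algebra_simps)
    ultimately show ?thesis using jacobian_covariant_mult jacobian_covariant_shear_upper by metis
  qed (use LDU assms S in simp)
qed

lemma w_iso_by_jacobian_smult:
  assumes "\<mu> \<noteq> 0"
  shows "w_iso_by (inverse \<mu>) 0 0 0 (bq_jacobian F) (bq_jacobian (smult (\<mu>^2) F))"
proof -
  define ui where "ui = inverse \<mu>"
  have ui: "\<mu> * ui = 1" using assms ui_def by simp
  show ?thesis unfolding bq_jacobian_eq jac_a4_def jac_a6_def coeff_smult ui_def[symmetric]
      w_iso_by.simps
    apply (intro conjI)
    apply (simp_all add: power_zero_numeral)
    using ui by algebra+
qed

lemma w_iso_by_jacobian_equiv: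
  assumes "\<mu> \<noteq> 0" "mat_det S \<noteq> 0"
  shows "\<exists>r s t. w_iso_by (inverse (\<mu> * mat_det S)) r s t (bq_jacobian F)
                   (bq_jacobian (smult (\<mu>^2) (mat_subst F S)))"
proof -
  obtain r s t where "w_iso_by (inverse (mat_det S)) r s t (bq_jacobian F)
      (bq_jacobian (mat_subst F S))"
    using jacobian_covariant_if_det_nonzero[OF assms(2)] jacobian_covariant_def by blast
  from w_iso_by_trans[OF this w_iso_by_jacobian_smult[OF assms(1)]]
  show ?thesis by (metis mult.commute inverse_mult_distrib)
qed

lemma bq_disc_equiv:
  assumes "\<mu> \<noteq> 0" "mat_det S \<noteq> 0"
  shows "bq_disc (smult (\<mu>^2) (mat_subst F S)) = (\<mu> * mat_det S)^12 * bq_disc F"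
proof -
  obtain r s t where "w_iso_by (inverse (\<mu> * mat_det S)) r s t (bq_jacobian F)
      (bq_jacobian (smult (\<mu>^2) (mat_subst F S)))"
    using w_iso_by_jacobian_equiv[OF assms] by blast
  then have "bq_disc F = (inverse (\<mu> * mat_det S))^12 * bq_disc (smult (\<mu>^2) (mat_subst F S))"
    unfolding bq_disc_eq_w_disc by (rule w_disc_w_iso_by)
  then show ?thesis using assms by (simp add: field_simps power_inverse)
qed

lemma min_disc_val_equiv:
  assumes "\<mu> \<noteq> 0" "mat_det S \<noteq> 0"
  shows "min_disc_val v (bq_jacobian (smult (\<mu>^2) (mat_subst F S)))
    = min_disc_val v (bq_jacobian F)"
proof -
  have "w_iso (bq_jacobian F) (bq_jacobian (smult (\<mu>^2) (mat_subst F S)))"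
    unfolding w_iso_iff using w_iso_by_jacobian_equiv[OF assms] assms
    by (metis mult_eq_0_iff inverse_nonzero_iff_nonzero)
  then show ?thesis using min_disc_val_w_iso by metis
qed

lemma (in dvr) bq_level_equiv:
  assumes "\<mu> \<noteq> 0" "mat_det S \<noteq> 0" "bq_disc F \<noteq> 0"
  shows "bq_level v (smult (\<mu>^2) (mat_subst F S)) = bq_level v F + v (\<mu> * mat_det S)"
proof -
  have m: "\<mu> * mat_det S \<noteq> 0" using assms by simp
  have "v (bq_disc (smult (\<mu>^2) (mat_subst F S))) = 12 * v (\<mu> * mat_det S) + v (bq_disc F)"
    unfolding bq_disc_equiv[OF assms(1,2)]
    using v_mult[of "(\<mu> * mat_det S)^12" "bq_disc F"] v_power[OF m, of 12] assms(3) m by simp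
  then show ?thesis unfolding bq_level_def min_disc_val_equiv[OF assms(1,2)] by simp
qed

section \<open>Consequences of positive level\<close>

context dvr
begin

lemma w_integral_bq_jacobian: "vge_poly 0 F \<Longrightarrow> w_integral v (bq_jacobian F)"
  unfolding bq_jacobian_eq w_integral_def jac_a4_def jac_a6_def
  using vge_poly_coeff[of 0 F] by (simp add: in_O_def[symmetric] in_O_intros)

lemma in_O_jacobian_coeffs:
  "vge_poly 0 F \<Longrightarrow> in_O v (jac_a4 F) \<and> in_O v (jac_a6 F) \<and> in_O v (coeff F 2)"
  unfolding jac_a4_def jac_a6_def
  using vge_poly_coeff[of 0 F] by (simp add: in_O_def[symmetric] in_O_intros)

lemma in_O_bq_disc: "vge_poly 0 F \<Longrightarrow> in_O v (bq_disc F)"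
  unfolding bq_disc_def bq_a_def bq_b_def bq_c_def bq_d_def bq_e_def Let_def
  using vge_poly_coeff[of 0 F] by (simp add: in_O_def[symmetric] in_O_intros)

lemma pos_level_w_iso_by:
  assumes int: "vge_poly 0 F" and nd: "bq_disc F \<noteq> 0" and lv: "bq_level v F > 0"
  obtains u r s t W' where "u \<noteq> 0" "w_iso_by u r s t (bq_jacobian F) W'" "w_integral v W'"
    "vge v 1 u"
proof -
  define P where "P n \<longleftrightarrow> (\<exists>W'. w_integral v W' \<and> w_iso (bq_jacobian F) W' \<and> w_disc W' \<noteq> 0
      \<and> v (w_disc W') = int n)" for n
  have "0 \<le> v (bq_disc F)" using in_O_bq_disc[OF int] nd by (simp add: in_O_def vge_def)
  moreover have "w_iso (bq_jacobian F) (bq_jacobian F)"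
    unfolding w_iso_iff using w_iso_by_refl one_neq_zero by blast
  ultimately have "P (nat (v (bq_disc F)))"
    unfolding P_def using w_integral_bq_jacobian[OF int] nd bq_disc_eq_w_disc[of F]
    by (intro exI[of _ "bq_jacobian F"]) auto
  then have "P (LEAST n. P n)" by (rule LeastI)
  then obtain W' where W': "w_integral v W'" "w_iso (bq_jacobian F) W'" "w_disc W' \<noteq> 0"
      "v (w_disc W') = min_disc_val v (bq_jacobian F)"
    unfolding P_def min_disc_val_def by auto
  then have "v (bq_disc F) - v (w_disc W') \<ge> 12" using lv unfolding bq_level_def by simp
  obtain u r s t where w: "u \<noteq> 0" "w_iso_by u r s t (bq_jacobian F) W'"
    using W'(2) w_iso_iff by blast
  have "bq_disc F = u^12 * w_disc W'" using w_disc_w_iso_by[OF w(2)] bq_disc_eq_w_disc by metis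
  then have "v (bq_disc F) = 12 * v u + v (w_disc W')"
    using v_mult[of "u^12" "w_disc W'"] v_power[OF w(1), of 12] w(1) W'(3) by simp
  then have "vge v 1 u" using \<open>v (bq_disc F) - v (w_disc W') \<ge> 12\<close> by (simp add: vge_def)
  then show ?thesis using that w W'(1) by blast
qed

text \<open>An element satisfying such relations is integral over \<open>O_K\<close> modulo both \<open>4\<close> and \<open>3\<close>;
  as these generate the unit ideal it lies in \<open>O_K\<close>.\<close>

lemma in_O_if_integral_relations:
  assumes P: "in_O v P0" "in_O v P1" "in_O v P2" and e4: "4*r^3 = P0 + P1*r + P2*r^2"
    and Q: "in_O v Q0" "in_O v Q1" "in_O v Q2" "in_O v Q3"
    and e3: "3*r^4 = Q0 + Q1*r + Q2*r^2 + Q3*r^3"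
  shows "in_O v r"
proof (rule ccontr)
  assume "\<not> in_O v r"
  then have r0: "r \<noteq> 0" and rneg: "v r < 0" by (auto simp: in_O_def vge_def)
  define n where "n = nat (- v r)"
  define p where "p = \<pi>^n"
  define \<rho> where "\<rho> = r * p"
  have p0: "p \<noteq> 0" using pi_nonzero p_def by simp
  have "v p = int n" using p_def by simp
  then have "v \<rho> = 0" "vge v 1 p" using v_mult[OF r0 p0] n_def rneg \<rho>_def by (simp_all add: vge_def)
  then have rhoO: "in_O v \<rho>" "\<not> vge v 1 \<rho>" and p1: "vge v 1 p"
    using r0 p0 \<rho>_def by (auto simp: in_O_def vge_def)
  have pO: "in_O v p" using in_O_if_vge[of 1 p] p1 by simp
  have "4*\<rho>^3 = P0*p^3 + P1*\<rho>*p^2 + P2*\<rho>^2*p" using e4 unfolding \<rho>_def by algebra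
  moreover have "vge v 1 (P0*p^3 + P1*\<rho>*p^2 + P2*\<rho>^2*p)"
    using P p1 pO rhoO
    by (intro vge_add vge_mult_in_O vge_in_O_mult in_O_intros;
        simp add: power2_eq_square power3_eq_cube vge_mult_in_O)
  ultimately have "vge v 1 (\<rho>^3 * 4)" by (simp add: mult.commute)
  then have v4: "vge v 1 4" using vge_unit_mult_cancel unit_power[OF rhoO] by blast
  have "3*\<rho>^4 = Q0*p^4 + Q1*\<rho>*p^3 + Q2*\<rho>^2*p^2 + Q3*\<rho>^3*p" using e3 unfolding \<rho>_def by algebra
  moreover have "vge v 1 (Q0*p^4 + Q1*\<rho>*p^3 + Q2*\<rho>^2*p^2 + Q3*\<rho>^3*p)"
    using Q p1 pO rhoO
    by (intro vge_add vge_mult_in_O vge_in_O_mult in_O_intros;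
        simp add: power2_eq_square power3_eq_cube power4_eq_xxxx vge_mult_in_O)
  ultimately have "vge v 1 (\<rho>^4 * 3)" by (simp add: mult.commute)
  then have v3: "vge v 1 3" using vge_unit_mult_cancel unit_power[OF rhoO] by blast
  have "vge v 1 (4 - 3)" using vge_diff[OF v4 v3] .
  then show False by (simp add: vge_def)
qed

lemma w_iso_by_rst_in_O:
  assumes int: "vge_poly 0 F" and w: "w_iso_by u r s t (bq_jacobian F) W'"
    and wi: "w_integral v W'" and uO: "in_O v u"
  shows "in_O v r \<and> in_O v s \<and> in_O v t"
proof -
  obtain a1 a2 a3 a4 a6 where W': "W' = (a1, a2, a3, a4, a6)" by (cases W') auto
  have aO: "in_O v a1" "in_O v a2" "in_O v a3" "in_O v a4" "in_O v a6"
    using wi W' by (auto simp: w_integral_def)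
  define c where "c = coeff F 2"
  define X where "X = jac_a4 F"
  define Y where "Y = jac_a6 F"
  have cO: "in_O v c" "in_O v X" "in_O v Y" using in_O_jacobian_coeffs[OF int] c_def X_def Y_def
    by auto
  have h: "u * a1 = 2*s" "u^2 * a2 = c + 3*r - s^2" "u^3 * a3 = 2*t"
    "u^4 * a4 = X + 2*r*c + 3*r^2 - 2*s*t" "u^6 * a6 = Y + r * X + r^2 * c + r^3 - t^2"
    using w unfolding W' bq_jacobian_eq c_def X_def Y_def by (simp_all add: algebra_simps)
  have e4: "4*r^3 = (u^6*(a3^2 + 4*a6) - 4*Y) + (-4*X)*r + (-4*c)*r^2"
    using h by algebra
  have e3: "3*r^4 = (u^8*(a1^2*a6 + 4*a2*a6 - a1*a3*a4 + a2*a3^2 - a4^2) - (4*c*Y - X^2))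
      + (-12*Y)*r + (-6*X)*r^2 + (-4*c)*r^3"
    using h by algebra
  have rO: "in_O v r"
    by (rule in_O_if_integral_relations[OF _ _ _ e4 _ _ _ _ e3])
      (use aO uO cO in \<open>auto intro!: in_O_intros\<close>)
  have "s^2 = c + 3*r - u^2*a2" using h by algebra
  then have sO: "in_O v s" using in_O_of_square[of s] aO uO cO rO by (auto intro!: in_O_intros)
  have "t^2 = Y + r*X + r^2*c + r^3 - u^6*a6" using h by algebra
  then have tO: "in_O v t" using in_O_of_square[of t] aO uO cO rO by (auto intro!: in_O_intros)
  show ?thesis using rO sO tO by blast
qed

lemma pos_level_congruences:
  assumes int: "vge_poly 0 F" and nd: "bq_disc F \<noteq> 0" and lv: "bq_level v F > 0"
    and odd: "\<not> vge v 1 2"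
  obtains r s t where "in_O v r" "in_O v s" "in_O v t" "vge v 1 s" "vge v 3 t"
    "vge v 2 (coeff F 2 + 3*r - s^2)"
    "vge v 4 (jac_a4 F + 2*r*coeff F 2 + 3*r^2 - 2*s*t)"
    "vge v 6 (jac_a6 F + r * jac_a4 F + r^2 * coeff F 2 + r^3 - t^2)"
proof -
  obtain u r s t W' where w: "u \<noteq> 0" "w_iso_by u r s t (bq_jacobian F) W'" "w_integral v W'"
    "vge v 1 u"
    using pos_level_w_iso_by[OF int nd lv] by blast
  have uO: "in_O v u" using w(4) in_O_if_vge[of 1 u] by simp
  have rst: "in_O v r" "in_O v s" "in_O v t" using w_iso_by_rst_in_O[OF int w(2) w(3) uO] by auto
  obtain a1 a2 a3 a4 a6 where W': "W' = (a1, a2, a3, a4, a6)" by (cases W') auto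
  have aO: "in_O v a1" "in_O v a2" "in_O v a3" "in_O v a4" "in_O v a6"
    using w(3) W' by (auto simp: w_integral_def)
  have u_pow: "vge v (int k) (u^k * a)" if "in_O v a" for k a
    using vge_mult_in_O[OF vge_power[OF w(4), of k] that] by simp
  have h: "u * a1 = 2*s" "u^2 * a2 = coeff F 2 + 3*r - s^2" "u^3 * a3 = 2*t"
    "u^4 * a4 = jac_a4 F + 2*r*coeff F 2 + 3*r^2 - 2*s*t"
    "u^6 * a6 = jac_a6 F + r * jac_a4 F + r^2 * coeff F 2 + r^3 - t^2"
    using w(2) unfolding W' bq_jacobian_eq by (simp_all add: algebra_simps)
  have "vge v 1 s" "vge v 3 t"
    using u_pow[OF aO(1), of 1] u_pow[OF aO(3), of 3] h(1,3)
      vge_unit_mult_cancel[of 2 1 s] vge_unit_mult_cancel[of 2 3 t] odd in_O_numeral by auto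
  then show ?thesis
    using that rst u_pow[OF aO(2), of 2] u_pow[OF aO(4), of 4] u_pow[OF aO(5), of 6] h by auto
qed

text \<open>The cubic \<open>x\<^sup>3 + c x\<^sup>2 + a\<^sub>4 x + a\<^sub>6\<close> of the Jacobian has the triple root \<open>r\<close>
  modulo \<open>\<pi>\<close>: its Taylor coefficients at \<open>r\<close> vanish modulo \<open>\<pi>\<close>.\<close>

definition jac_triple_root :: "'a poly \<Rightarrow> 'a \<Rightarrow> bool" where
  "jac_triple_root F r \<longleftrightarrow> in_O v r \<and> vge v 1 (coeff F 2 + 3*r)
     \<and> vge v 1 (jac_a4 F + 2*r*coeff F 2 + 3*r^2)
     \<and> vge v 1 (jac_a6 F + r * jac_a4 F + r^2 * coeff F 2 + r^3)"

lemma pos_level_jac_triple_root: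
  assumes int: "vge_poly 0 F" and nd: "bq_disc F \<noteq> 0" and lv: "bq_level v F > 0"
    and odd: "\<not> vge v 1 2"
  shows "\<exists>r. jac_triple_root F r"
proof -
  obtain r s t where h: "in_O v r" "in_O v s" "in_O v t" "vge v 1 s" "vge v 3 t"
    "vge v 2 (coeff F 2 + 3*r - s^2)" "vge v 4 (jac_a4 F + 2*r*coeff F 2 + 3*r^2 - 2*s*t)"
    "vge v 6 (jac_a6 F + r * jac_a4 F + r^2 * coeff F 2 + r^3 - t^2)"
    using pos_level_congruences[OF int nd lv odd] by blast
  have "vge v 1 ((coeff F 2 + 3*r - s^2) + s^2)"
    by (insert h(6,4), rule vge_weaken, (assumption | rule vge_bound_rules)+, simp)
  moreover have "vge v 1 ((jac_a4 F + 2*r*coeff F 2 + 3*r^2 - 2*s*t) + 2*s*t)"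
    by (insert h(7,4,5), rule vge_weaken, (assumption | rule vge_bound_rules)+, simp)
  moreover have "vge v 1 ((jac_a6 F + r * jac_a4 F + r^2 * coeff F 2 + r^3 - t^2) + t^2)"
    by (insert h(8,5), rule vge_weaken, (assumption | rule vge_bound_rules)+, simp)
  ultimately show ?thesis using h(1) unfolding jac_triple_root_def by auto
qed

lemma jac_triple_root_smult:
  "coeff (smult k F) 2 = k * coeff F 2" "jac_a4 (smult k F) = k^2 * jac_a4 F"
  "jac_a6 (smult k F) = k^3 * jac_a6 F"
  by (simp_all add: jac_a4_def jac_a6_def algebra_simps power2_eq_square power3_eq_cube)

text \<open>If \<open>F = \<pi> F\<^sub>1\<close>, the Jacobian of \<open>F\<close> is that of \<open>F\<^sub>1\<close> scaled by \<open>u = \<pi>\<close>, so its triple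
  root \<open>r\<close> is divisible by \<open>\<pi>\<close> and \<open>r / \<pi>\<close> is a triple root for \<open>F\<^sub>1\<close>.\<close>

lemma pos_level_jac_triple_root_div_pi:
  assumes int1: "vge_poly 0 F1" and FF: "F = smult \<pi> F1" and nd: "bq_disc F \<noteq> 0"
    and lv: "bq_level v F > 0" and odd: "\<not> vge v 1 2"
  shows "\<exists>r. jac_triple_root F1 r"
proof -
  have int: "vge_poly 0 F" unfolding FF vge_poly_def using vge_poly_coeff[OF int1] in_O_pi
    by (auto simp: in_O_def[symmetric] intro: in_O_mult)
  define c where "c = coeff F1 2"
  define X where "X = jac_a4 F1"
  define Y where "Y = jac_a6 F1"
  have cO: "vge v 0 c" "vge v 0 X" "vge v 0 Y"
    using in_O_jacobian_coeffs[OF int1] c_def X_def Y_def by (auto simp: vge_0_if_in_O)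
  have FA: "coeff F 2 = \<pi> * c" "jac_a4 F = \<pi>^2 * X" "jac_a6 F = \<pi>^3 * Y"
    unfolding FF jac_triple_root_smult c_def X_def Y_def by simp_all
  obtain r s t where h: "in_O v r" "in_O v s" "in_O v t" "vge v 1 s" "vge v 3 t"
    "vge v 2 (\<pi> * c + 3*r - s^2)" "vge v 4 (\<pi>^2 * X + 2*r*(\<pi> * c) + 3*r^2 - 2*s*t)"
    "vge v 6 (\<pi>^3 * Y + r * (\<pi>^2 * X) + r^2 * (\<pi> * c) + r^3 - t^2)"
    using pos_level_congruences[OF int nd lv odd] unfolding FA by blast
  have "r^3 = (\<pi>^3 * Y + r * (\<pi>^2 * X) + r^2 * (\<pi> * c) + r^3 - t^2)
      - \<pi>^3 * Y - r * (\<pi>^2 * X) - r^2 * (\<pi> * c) + t^2"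
    by simp
  moreover have "vge v 1 ((\<pi>^3 * Y + r * (\<pi>^2 * X) + r^2 * (\<pi> * c) + r^3 - t^2)
      - \<pi>^3 * Y - r * (\<pi>^2 * X) - r^2 * (\<pi> * c) + t^2)"
    by (insert h(8) cO vge_1_pi vge_0_if_in_O[OF h(1)] h(5), rule vge_weaken,
        (assumption | rule vge_bound_rules)+, simp)
  ultimately have "vge v 1 r" using vge_1_of_power[of r 3] h(1) by simp
  define r1 where "r1 = r / \<pi>"
  have rr: "r = \<pi> * r1" unfolding r1_def using pi_nonzero by simp
  have r1O: "in_O v r1" using \<open>vge v 1 r\<close> vge_pi_mult_iff[of 0 r1] rr by (simp add: in_O_def)
  have "\<pi> * (c + 3*r1) = (\<pi> * c + 3*r - s^2) + s^2" unfolding rr by (simp add: algebra_simps)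
  moreover have "vge v 2 ((\<pi> * c + 3*r - s^2) + s^2)"
    by (insert h(6) h(4), rule vge_weaken, (assumption | rule vge_bound_rules)+, simp)
  ultimately have 1: "vge v 1 (c + 3*r1)" using vge_pi_mult_iff[of 1 "c + 3*r1"] by simp
  have "\<pi>^2 * (X + 2*r1*c + 3*r1^2) = (\<pi>^2 * X + 2*r*(\<pi> * c) + 3*r^2 - 2*s*t) + 2*s*t"
    unfolding rr by (simp add: algebra_simps power2_eq_square)
  moreover have "vge v 4 ((\<pi>^2 * X + 2*r*(\<pi> * c) + 3*r^2 - 2*s*t) + 2*s*t)"
    by (insert h(7) h(4) h(5), rule vge_weaken, (assumption | rule vge_bound_rules)+, simp)
  ultimately have "vge v 2 (X + 2*r1*c + 3*r1^2)"
    using vge_pi_power_mult_iff[of 2 2 "X + 2*r1*c + 3*r1^2"] by simp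
  then have 2: "vge v 1 (X + 2*r1*c + 3*r1^2)" by (rule vge_weaken) simp
  have "\<pi>^3 * (Y + r1 * X + r1^2 * c + r1^3)
      = (\<pi>^3 * Y + r * (\<pi>^2 * X) + r^2 * (\<pi> * c) + r^3 - t^2) + t^2"
    unfolding rr by (simp add: algebra_simps power2_eq_square power3_eq_cube)
  moreover have "vge v 6 ((\<pi>^3 * Y + r * (\<pi>^2 * X) + r^2 * (\<pi> * c) + r^3 - t^2) + t^2)"
    by (insert h(8) h(5), rule vge_weaken, (assumption | rule vge_bound_rules)+, simp)
  ultimately have "vge v 3 (Y + r1 * X + r1^2 * c + r1^3)"
    using vge_pi_power_mult_iff[of 3 3 "Y + r1 * X + r1^2 * c + r1^3"] by simp
  then have 3: "vge v 1 (Y + r1 * X + r1^2 * c + r1^3)" by (rule vge_weaken) simp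
  show ?thesis using r1O 1 2 3 unfolding jac_triple_root_def c_def X_def Y_def by blast
qed

end

section \<open>Triple roots modulo \<open>\<pi>\<close>\<close>

lemma linear_cube_mult_linear:
  "[:-x0, z0:]^3 * [:h0, h1:] = quartic (- (x0^3*h0)) (3*x0^2*z0*h0 - x0^3*h1)
     (3*x0^2*z0*h1 - 3*x0*z0^2*h0) (z0^3*h0 - 3*x0*z0^2*h1) (z0^3*h1)"
  by (simp add: quartic_def numeral_eq_Suc algebra_simps power2_eq_square)

lemma mat_subst_linear_cube_mult_linear:
  "mat_subst ([:-x0, z0:]^3 * [:h0, h1:]) (A, B, C, D) =
     [:-(x0*D - z0*B), z0*A - x0*C:]^3 * [:h1*B + h0*D, h1*A + h0*C:]"
  unfolding linear_cube_mult_linear mat_subst_quartic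
  unfolding subst_coeff_defs quartic_def
  by (simp only: pCons_eq_iff) algebra

lemma diff_linear_cube_mult_linear:
  "degree G \<le> 4 \<Longrightarrow> G - [:-x0, z0:]^3 * [:h0, h1:] =
     quartic (coeff G 0 + x0^3*h0) (coeff G 1 - (3*x0^2*z0*h0 - x0^3*h1))
       (coeff G 2 - (3*x0^2*z0*h1 - 3*x0*z0^2*h0)) (coeff G 3 - (z0^3*h0 - 3*x0*z0^2*h1))
       (coeff G 4 - z0^3*h1)"
  by (subst quartic_coeffs[of G], assumption) (unfold linear_cube_mult_linear quartic_diff, simp)

context dvr
begin

lemma bq_root_mult_ge_3I:
  assumes "in_O v x0" "in_O v z0" "\<not> (vge v 1 x0 \<and> vge v 1 z0)" "in_O v h0" "in_O v h1"
    "vge_poly 1 (P - [:-x0, z0:]^3 * [:h0, h1:])"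
  shows "bq_root_mult_ge v P x0 z0 3"
  unfolding bq_root_mult_ge_def
proof (intro conjI exI[of _ "[:h0, h1:]"])
  show "\<forall>i. in_O v (coeff [:h0, h1:] i)"
    using assms(4,5) by (auto simp: coeff_pCons in_O_0 split: nat.splits)
  show "\<forall>i. vge v 1 (coeff (P - [:- x0, z0:] ^ 3 * [:h0, h1:]) i)"
    using assms(6) by (simp add: vge_poly_def)
qed (use assms in auto)

lemma bq_root_mult_ge_3E:
  assumes "bq_root_mult_ge v P x0 z0 3"
  obtains h0 h1 where "in_O v x0" "in_O v z0" "\<not> (vge v 1 x0 \<and> vge v 1 z0)" "in_O v h0"
    "in_O v h1" "vge_poly 1 (P - [:-x0, z0:]^3 * [:h0, h1:])"
proof -
  obtain H where H: "degree H \<le> 1" "\<forall>i. in_O v (coeff H i)"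
      "\<forall>i. vge v 1 (coeff (P - [:-x0, z0:]^3 * H) i)"
    and xz: "in_O v x0" "in_O v z0" "\<not> (vge v 1 x0 \<and> vge v 1 z0)"
    using assms unfolding bq_root_mult_ge_def by auto
  have "H = [:coeff H 0, coeff H 1:]"
    using H(1) by (intro poly_eqI) (auto simp: coeff_pCons coeff_eq_0 split: nat.splits)
  then show ?thesis using that H xz unfolding vge_poly_def by metis
qed

lemma bq_root_mult_ge_3_mat_subst:
  assumes r: "bq_root_mult_ge v P x0 z0 3" and g: "in_GL2_O N"
  shows "\<exists>x0' z0'. bq_root_mult_ge v (mat_subst P N) x0' z0' 3"
proof -
  obtain A B C D where N: "N = (A, B, C, D)" by (cases N) auto
  obtain h0 h1 where h: "in_O v x0" "in_O v z0" "\<not> (vge v 1 x0 \<and> vge v 1 z0)" "in_O v h0"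
    "in_O v h1" "vge_poly 1 (P - [:-x0, z0:]^3 * [:h0, h1:])"
    using bq_root_mult_ge_3E[OF r] by blast
  have ent: "in_O v A" "in_O v B" "in_O v C" "in_O v D" "in_O v (A*D - B*C)"
    "\<not> vge v 1 (A*D - B*C)"
    using g N by (auto intro!: in_O_intros)
  have "vge_poly 1 (mat_subst (P - [:-x0, z0:]^3 * [:h0, h1:]) N)"
    using vge_poly_mat_subst_GL2_O[OF g h(6)] .
  then have 1: "vge_poly 1 (mat_subst P N
      - [:-(x0*D - z0*B), z0*A - x0*C:]^3 * [:h1*B + h0*D, h1*A + h0*C:])"
    unfolding mat_subst_diff N mat_subst_linear_cube_mult_linear .
  have 2: "\<not> (vge v 1 (x0*D - z0*B) \<and> vge v 1 (z0*A - x0*C))"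
  proof
    assume a: "vge v 1 (x0*D - z0*B) \<and> vge v 1 (z0*A - x0*C)"
    have "(A*D - B*C) * z0 = D * (z0*A - x0*C) + C * (x0*D - z0*B)" by algebra
    moreover have "vge v 1 (D * (z0*A - x0*C) + C * (x0*D - z0*B))"
      using a ent by (intro vge_add vge_in_O_mult) auto
    ultimately have "vge v 1 z0" using vge_unit_mult_cancel[OF ent(5,6)] by simp
    have "(A*D - B*C) * x0 = B * (z0*A - x0*C) + A * (x0*D - z0*B)" by algebra
    moreover have "vge v 1 (B * (z0*A - x0*C) + A * (x0*D - z0*B))"
      using a ent by (intro vge_add vge_in_O_mult) auto
    ultimately have "vge v 1 x0" using vge_unit_mult_cancel[OF ent(5,6)] by simp
    then show False using \<open>vge v 1 z0\<close> h(3) by blast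
  qed
  show ?thesis
    by (rule exI, rule exI, rule bq_root_mult_ge_3I[OF _ _ 2 _ _ 1])
      (use h ent in \<open>auto intro!: in_O_intros\<close>)
qed

lemma bq_root_mult_ge_3_at_0_1_coeffs:
  assumes "bq_root_mult_ge v P 0 1 3" "degree P \<le> 4"
  shows "vge v 1 (coeff P 0) \<and> vge v 1 (coeff P 1) \<and> vge v 1 (coeff P 2)"
proof -
  obtain h0 h1 where "vge_poly 1 (P - [:-0, 1:]^3 * [:h0, h1:])"
    using bq_root_mult_ge_3E[OF assms(1)] by blast
  then show ?thesis unfolding diff_linear_cube_mult_linear[OF assms(2)] vge_poly_quartic by simp
qed

lemma bq_root_mult_ge_3_at_0_1I:
  assumes "vge_poly 0 P" "degree P \<le> 4"
    "vge v 1 (coeff P 0)" "vge v 1 (coeff P 1)" "vge v 1 (coeff P 2)"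
  shows "bq_root_mult_ge v P 0 1 3"
proof -
  have "vge_poly 1 (P - [:-0, 1:]^3 * [:coeff P 3, coeff P 4:])"
    unfolding diff_linear_cube_mult_linear[OF assms(2)] vge_poly_quartic using assms(3-5) by simp
  then show ?thesis
    by (rule bq_root_mult_ge_3I[rotated 5])
      (use assms(1) in \<open>simp_all add: in_O_intros vge_def in_O_def vge_poly_def\<close>)
qed

end

context dvr
begin

lemma unit_two_power: "\<not> vge v 1 2 \<Longrightarrow> in_O v (2^k) \<and> \<not> vge v 1 (2^k)"
  using unit_power[of 2 k] in_O_numeral by blast

lemma unit_four: "\<not> vge v 1 2 \<Longrightarrow> in_O v 4 \<and> \<not> vge v 1 (4::'a)"
  using unit_two_power[of 2] by simp

lemma depressed_quartic_congruences:
  assumes b0: "coeff G 3 = 0" and cO: "vge v 0 (coeff G 2)" and r: "jac_triple_root G r"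
  shows "vge v 1 (coeff G 2 + 3*r)" "vge v 1 (4 * coeff G 4 * coeff G 0 + 3*r^2)"
    "vge v 1 (coeff G 4 * (coeff G 1)^2 - 8*r^3)"
proof -
  define a where "a = coeff G 4"
  define c where "c = coeff G 2"
  define d where "d = coeff G 1"
  define e where "e = coeff G 0"
  have rO: "vge v 0 r" using r unfolding jac_triple_root_def by (simp add: in_O_def)
  have p1: "vge v 1 (c + 3*r)" and p2: "vge v 1 (- 4*a*e + 2*r*c + 3*r^2)"
    and p3: "vge v 1 (a*d^2 - 4*a*c*e + r * (- 4*a*e) + r^2 * c + r^3)"
    using r b0 unfolding jac_triple_root_def jac_a4_def jac_a6_def a_def c_def d_def e_def
      by simp_all
  have "4*a*e + 3*r^2 = - (- 4*a*e + 2*r*c + 3*r^2) + 2*r*(c + 3*r)" by algebra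
  moreover have "vge v 1 (- (- 4*a*e + 2*r*c + 3*r^2) + 2*r*(c + 3*r))"
    by (insert p2 p1 rO, rule vge_weaken, (assumption | rule vge_bound_rules)+, simp)
  ultimately have q1: "vge v 1 (4*a*e + 3*r^2)" by metis
  have "a*d^2 - 8*r^3 = (a*d^2 - 4*a*c*e + r * (- 4*a*e) + r^2 * c + r^3) - 4*r^2*(c + 3*r)
      + (c + r)*(4*a*e + 3*r^2)"
    by algebra
  moreover have "vge v 1 ((a*d^2 - 4*a*c*e + r * (- 4*a*e) + r^2 * c + r^3) - 4*r^2*(c + 3*r)
      + (c + r)*(4*a*e + 3*r^2))"
    by (insert p3 p1 q1 rO cO[folded c_def], rule vge_weaken,
        (assumption | rule vge_bound_rules)+, simp)
  ultimately have "vge v 1 (a*d^2 - 8*r^3)" by metis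
  with p1 q1 show "vge v 1 (coeff G 2 + 3*r)" "vge v 1 (4 * coeff G 4 * coeff G 0 + 3*r^2)"
    "vge v 1 (coeff G 4 * (coeff G 1)^2 - 8*r^3)"
    unfolding a_def c_def d_def e_def by simp_all
qed

lemma depressed_quartic_triple_root_0_1:
  assumes int: "vge_poly 0 G" and dg: "degree G \<le> 4" and b0: "coeff G 3 = 0"
    and au: "in_O v (coeff G 4)" "\<not> vge v 1 (coeff G 4)" and odd: "\<not> vge v 1 2"
    and r1: "vge v 1 r" and p1: "vge v 1 (coeff G 2 + 3*r)"
    and q1: "vge v 1 (4 * coeff G 4 * coeff G 0 + 3*r^2)"
    and q2: "vge v 1 (coeff G 4 * (coeff G 1)^2 - 8*r^3)"
  shows "bq_root_mult_ge v G 0 1 3"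
proof -
  have "coeff G 2 = (coeff G 2 + 3*r) - 3*r" by simp
  moreover have "vge v 1 ((coeff G 2 + 3*r) - 3*r)"
    by (insert p1 r1, rule vge_weaken, (assumption | rule vge_bound_rules)+, simp)
  ultimately have c1: "vge v 1 (coeff G 2)" by simp
  have "4 * coeff G 4 * coeff G 0 = (4 * coeff G 4 * coeff G 0 + 3*r^2) - 3*r^2" by simp
  moreover have "vge v 1 ((4 * coeff G 4 * coeff G 0 + 3*r^2) - 3*r^2)"
    by (insert q1 r1, rule vge_weaken, (assumption | rule vge_bound_rules)+, simp)
  ultimately have "vge v 1 ((4 * coeff G 4) * coeff G 0)" by simp
  moreover have "in_O v (4 * coeff G 4) \<and> \<not> vge v 1 (4 * coeff G 4)"
    using unit_mult[of 4] unit_four[OF odd] au by blast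
  ultimately have e1: "vge v 1 (coeff G 0)" using vge_unit_mult_cancel by blast
  have "coeff G 4 * (coeff G 1)^2 = (coeff G 4 * (coeff G 1)^2 - 8*r^3) + 8*r^3" by simp
  moreover have "vge v 1 ((coeff G 4 * (coeff G 1)^2 - 8*r^3) + 8*r^3)"
    by (insert q2 r1, rule vge_weaken, (assumption | rule vge_bound_rules)+, simp)
  ultimately have "vge v 1 ((coeff G 1)^2)" using vge_unit_mult_cancel[OF au] by simp
  then have d1: "vge v 1 (coeff G 1)" using vge_1_of_power[of "coeff G 1" 2] int
    by (simp add: in_O_def vge_poly_def)
  show ?thesis using bq_root_mult_ge_3_at_0_1I[OF int dg e1 d1 c1] .
qed

text \<open>If \<open>r\<close> is a unit, the triple root of \<open>G\<close> is at \<open>(\<rho> : 1)\<close> with \<open>\<rho> = d / (4 r)\<close>, and the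
  cofactor is \<open>a (x + 3 \<rho> z)\<close>.\<close>

lemma depressed_quartic_triple_root_rho:
  assumes int: "vge_poly 0 G" and dg: "degree G \<le> 4" and b0: "coeff G 3 = 0"
    and au: "in_O v (coeff G 4)" "\<not> vge v 1 (coeff G 4)" and odd: "\<not> vge v 1 2"
    and ru: "in_O v r" "\<not> vge v 1 r" and p1: "vge v 1 (coeff G 2 + 3*r)"
    and q1: "vge v 1 (4 * coeff G 4 * coeff G 0 + 3*r^2)"
    and q2: "vge v 1 (coeff G 4 * (coeff G 1)^2 - 8*r^3)"
  shows "\<exists>\<rho>. bq_root_mult_ge v G \<rho> 1 3"
proof -
  define a where "a = coeff G 4"
  define c where "c = coeff G 2"
  define d where "d = coeff G 1"
  define e where "e = coeff G 0"
  define Q1 where "Q1 = 4*a*e + 3*r^2"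
  define Q2 where "Q2 = a*d^2 - 8*r^3"
  have dO: "in_O v d" using int unfolding d_def vge_poly_def in_O_def by simp
  have p1': "vge v 1 (c + 3*r)" and q1': "vge v 1 Q1" and q2': "vge v 1 Q2"
    using p1 q1 q2 unfolding Q1_def Q2_def a_def c_def d_def e_def by simp_all
  have unit: "in_O v x \<and> \<not> vge v 1 x" if "x \<in> {4*r, 16*r^2, 64*r^3, 1024*a*r^4}" for x
  proof -
    have "in_O v (2^k * r^j) \<and> \<not> vge v 1 (2^k * r^j)" for k j
      using unit_mult[of "2^k" "r^j"] unit_two_power[OF odd, of k] unit_power[OF ru, of j] by blast
    from this[of 2 1] this[of 4 2] this[of 6 3] this[of 10 4]
    show ?thesis using that unit_mult[OF au, of "1024 * r^4"] unfolding a_def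
      by (auto simp: mult_ac)
  qed
  have "4*r \<noteq> 0" using unit[of "4*r"] by (auto simp: vge_def)
  define \<rho> where "\<rho> = d * inverse (4*r)"
  have rho: "4*r*\<rho> = d" unfolding \<rho>_def using \<open>4*r \<noteq> 0\<close> by simp
  have rhoO: "in_O v \<rho>" unfolding \<rho>_def using unit[of "4*r"] dO unit_inverse in_O_mult by blast
  have "16*r^2 * (c + 6*a*\<rho>^2) = 16*r^2*(c + 3*r) + 6*Q2"
    unfolding Q2_def rho[symmetric] by (simp add: algebra_simps power2_eq_square power3_eq_cube)
  moreover have "vge v 1 (16*r^2*(c + 3*r) + 6*Q2)"
    by (insert p1' q2' vge_0_if_in_O[OF ru(1)], rule vge_weaken,
        (assumption | rule vge_bound_rules)+, simp)
  ultimately have "vge v 1 (16*r^2 * (c + 6*a*\<rho>^2))" by metis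
  then have k2: "vge v 1 (c + 6*a*\<rho>^2)" using unit[of "16*r^2"] vge_unit_mult_cancel by blast
  have "64*r^3 * (d - 8*a*\<rho>^3) = - 8*d*Q2"
    unfolding Q2_def rho[symmetric] by (simp add: algebra_simps power2_eq_square power3_eq_cube)
  moreover have "vge v 1 (- 8*d*Q2)"
    by (insert q2' vge_0_if_in_O[OF dO], rule vge_weaken,
        (assumption | rule vge_bound_rules)+, simp)
  ultimately have "vge v 1 (64*r^3 * (d - 8*a*\<rho>^3))" by metis
  then have k1: "vge v 1 (d - 8*a*\<rho>^3)" using unit[of "64*r^3"] vge_unit_mult_cancel by blast
  have "1024*a*r^4 * (e + 3*a*\<rho>^4) = 256*r^4*Q1 + 12*Q2^2 + 192*r^3*Q2"
    unfolding Q1_def Q2_def rho[symmetric]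
    by (simp add: algebra_simps power2_eq_square power3_eq_cube power4_eq_xxxx)
  moreover have "vge v 1 (256*r^4*Q1 + 12*Q2^2 + 192*r^3*Q2)"
    by (insert q1' q2' vge_0_if_in_O[OF ru(1)], rule vge_weaken,
        (assumption | rule vge_bound_rules)+, simp)
  ultimately have "vge v 1 (1024*a*r^4 * (e + 3*a*\<rho>^4))" by metis
  then have k0: "vge v 1 (e + 3*a*\<rho>^4)" using unit[of "1024*a*r^4"] vge_unit_mult_cancel by blast
  have "vge_poly 1 (G - [:-\<rho>, 1:]^3 * [:3*a*\<rho>, a:])"
    unfolding diff_linear_cube_mult_linear[OF dg] vge_poly_quartic b0
      a_def[symmetric] c_def[symmetric] d_def[symmetric] e_def[symmetric]
    using k0 k1 k2 by (simp add: algebra_simps power2_eq_square power3_eq_cube power4_eq_xxxx)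
  then have "bq_root_mult_ge v G \<rho> 1 3"
    by (rule bq_root_mult_ge_3I[rotated 5])
      (use au rhoO in \<open>simp_all add: in_O_intros vge_def a_def\<close>)
  then show ?thesis by blast
qed

lemma depressed_quartic_triple_root:
  assumes int: "vge_poly 0 G" and dg: "degree G \<le> 4" and b0: "coeff G 3 = 0"
    and au: "in_O v (coeff G 4)" "\<not> vge v 1 (coeff G 4)" and odd: "\<not> vge v 1 2"
    and r: "jac_triple_root G r"
  shows "\<exists>x0 z0. bq_root_mult_ge v G x0 z0 3"
proof -
  have "vge v 0 (coeff G 2)" using int by (simp add: vge_poly_def)
  note congs = depressed_quartic_congruences[OF b0 this r]
  have "in_O v r" using r by (simp add: jac_triple_root_def)
  then show ?thesis
    using depressed_quartic_triple_root_0_1[OF int dg b0 au odd _ congs]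
      depressed_quartic_triple_root_rho[OF int dg b0 au odd _ _ congs] by blast
qed

end

context dvr
begin

lemma extreme_coeffs_vanish_congruences:
  assumes int: "vge_poly 0 G" and a1: "vge v 1 (coeff G 4)" and e1: "vge v 1 (coeff G 0)"
    and r: "jac_triple_root G r"
  shows "vge v 1 (coeff G 2)" "vge v 1 (coeff G 3) \<or> vge v 1 (coeff G 1)"
proof -
  define a where "a = coeff G 4"
  define b where "b = coeff G 3"
  define c where "c = coeff G 2"
  define d where "d = coeff G 1"
  define e where "e = coeff G 0"
  have cO: "vge v 0 a" "vge v 0 b" "vge v 0 c" "vge v 0 d" "vge v 0 e"
    using int unfolding vge_poly_def a_def b_def c_def d_def e_def by auto
  have ae: "vge v 1 a" "vge v 1 e" using a1 e1 a_def e_def by auto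
  have rO: "in_O v r" and p1: "vge v 1 (c + 3*r)"
    and p2: "vge v 1 ((b*d - 4*a*e) + 2*r*c + 3*r^2)"
    and p3: "vge v 1 ((a*d^2 + b^2*e - 4*a*c*e) + r * (b*d - 4*a*e) + r^2 * c + r^3)"
    using r unfolding jac_triple_root_def jac_a4_def jac_a6_def a_def b_def c_def d_def e_def
    by auto
  have "r^3 = ((a*d^2 + b^2*e - 4*a*c*e) + r * (b*d - 4*a*e) + r^2 * c + r^3)
      - r*((b*d - 4*a*e) + 2*r*c + 3*r^2) + r^2*(c + 3*r) - (a*d^2 + b^2*e - 4*a*c*e)"
    by algebra
  moreover have "vge v 1 (((a*d^2 + b^2*e - 4*a*c*e) + r * (b*d - 4*a*e) + r^2 * c + r^3)
      - r*((b*d - 4*a*e) + 2*r*c + 3*r^2) + r^2*(c + 3*r) - (a*d^2 + b^2*e - 4*a*c*e))"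
    by (insert p3 p2 p1 ae cO vge_0_if_in_O[OF rO], rule vge_weaken,
        (assumption | rule vge_bound_rules)+, simp)
  ultimately have "vge v 1 (r^3)" by metis
  then have r1: "vge v 1 r" using vge_1_of_power[of r 3] rO by simp
  have "c = (c + 3*r) - 3*r" by simp
  moreover have "vge v 1 ((c + 3*r) - 3*r)"
    by (insert p1 r1, rule vge_weaken, (assumption | rule vge_bound_rules)+, simp)
  ultimately show "vge v 1 (coeff G 2)" unfolding c_def by simp
  have "b*d = ((b*d - 4*a*e) + 2*r*c + 3*r^2) + 4*a*e - 2*r*c - 3*r^2" by simp
  moreover have "vge v 1 (((b*d - 4*a*e) + 2*r*c + 3*r^2) + 4*a*e - 2*r*c - 3*r^2)"
    by (insert p2 ae cO r1, rule vge_weaken, (assumption | rule vge_bound_rules)+, simp)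
  ultimately have "vge v 1 (b*d)" by simp
  then show "vge v 1 (coeff G 3) \<or> vge v 1 (coeff G 1)"
    using unit_mult[of b d] cO unfolding b_def d_def by (auto simp: in_O_def)
qed

lemma triple_root_if_extreme_coeffs_vanish:
  assumes int: "vge_poly 0 G" and dg: "degree G \<le> 4"
    and a1: "vge v 1 (coeff G 4)" and e1: "vge v 1 (coeff G 0)" and r: "jac_triple_root G r"
  shows "\<exists>x0 z0. bq_root_mult_ge v G x0 z0 3"
  using extreme_coeffs_vanish_congruences(2)[OF int a1 e1 r]
proof
  assume "vge v 1 (coeff G 3)"
  then have "vge_poly 1 (G - [:-1, 0:]^3 * [:0, - coeff G 1:])"
    unfolding diff_linear_cube_mult_linear[OF dg] vge_poly_quartic
    using extreme_coeffs_vanish_congruences(1)[OF int a1 e1 r] a1 e1 by simp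
  then have "bq_root_mult_ge v G 1 0 3"
    by (rule bq_root_mult_ge_3I[rotated 5])
      (use int in \<open>simp_all add: in_O_intros vge_def in_O_def vge_poly_def\<close>)
  then show ?thesis by blast
next
  assume "vge v 1 (coeff G 1)"
  then have "bq_root_mult_ge v G 0 1 3"
    using bq_root_mult_ge_3_at_0_1I[OF int dg e1]
      extreme_coeffs_vanish_congruences(1)[OF int a1 e1 r]
    by blast
  then show ?thesis by blast
qed

definition scaled_pos_level :: "'a poly \<Rightarrow> 'a poly \<Rightarrow> nat \<Rightarrow> bool" where
  "scaled_pos_level F F1 w \<longleftrightarrow> vge_poly 0 F \<and> degree F \<le> 4 \<and> bq_disc F \<noteq> 0 \<and>
     bq_level v F > 0 \<and> w \<le> 1 \<and> F = smult (\<pi>^w) F1 \<and> vge_poly 0 F1 \<and> degree F1 \<le> 4"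

lemma scaled_pos_level_jac_triple_root:
  assumes h: "scaled_pos_level F F1 w" and odd: "\<not> vge v 1 2"
  shows "\<exists>r. jac_triple_root F1 r"
proof (cases "w = 0")
  case True
  then show ?thesis using pos_level_jac_triple_root[OF _ _ _ odd] h
    unfolding scaled_pos_level_def by auto
next
  case False
  then have "w = 1" using h unfolding scaled_pos_level_def by simp
  then show ?thesis using pos_level_jac_triple_root_div_pi[OF _ _ _ _ odd] h
    unfolding scaled_pos_level_def by auto
qed

lemma scaled_pos_level_mat_subst:
  assumes h: "scaled_pos_level F F1 w" and g: "in_GL2_O M"
  shows "scaled_pos_level (mat_subst F M) (mat_subst F1 M) w"
proof -
  have d0: "mat_det M \<noteq> 0" using in_GL2_O_det_nonzero[OF g] .
  have "v (mat_det M) = 0" using in_GL2_O_det[OF g] unit_v_eq_0 by blast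
  moreover have "bq_disc F \<noteq> 0" using h scaled_pos_level_def by blast
  ultimately have "bq_level v (mat_subst F M) = bq_level v F" "bq_disc (mat_subst F M) \<noteq> 0"
    using bq_level_equiv[of 1 M F, OF _ d0] bq_disc_equiv[of 1 M F, OF _ d0] d0 by simp_all
  then show ?thesis
    using h vge_poly_mat_subst_GL2_O[OF g] degree_mat_subst mat_subst_smult
    unfolding scaled_pos_level_def by metis
qed

lemma triple_root_if_triple_root_mat_subst:
  assumes "scaled_pos_level F F1 w" "in_GL2_O M"
    "\<exists>x0 z0. bq_root_mult_ge v (mat_subst F1 M) x0 z0 3"
  shows "\<exists>x0 z0. bq_root_mult_ge v F1 x0 z0 3"
proof -
  obtain x0 z0 where "bq_root_mult_ge v (mat_subst F1 M) x0 z0 3" using assms(3) by blast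
  moreover have "mat_subst (mat_subst F1 M) (mat_inv M) = F1"
    using mat_subst_inv assms(1,2) in_GL2_O_det_nonzero scaled_pos_level_def by blast
  ultimately show ?thesis using bq_root_mult_ge_3_mat_subst[OF _ in_GL2_O_inv[OF assms(2)]] by metis
qed

text \<open>A unit leading coefficient \<open>a\<close> lets us complete the quartic: \<open>x \<mapsto> x - b/(4a) z\<close> kills \<open>b\<close>.\<close>

lemma triple_root_if_lead_unit:
  assumes h: "scaled_pos_level F F1 w" and odd: "\<not> vge v 1 2" and au: "\<not> vge v 1 (coeff F1 4)"
  shows "\<exists>x0 z0. bq_root_mult_ge v F1 x0 z0 3"
proof -
  define a where "a = coeff F1 4"
  define b where "b = coeff F1 3"
  have aO: "in_O v a" "\<not> vge v 1 a"
    using h au a_def unfolding scaled_pos_level_def vge_poly_def in_O_def by auto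
  have a4u: "in_O v (4*a)" "\<not> vge v 1 (4*a)" using unit_mult[of 4 a] unit_four[OF odd] aO by auto
  then have "4*a \<noteq> 0" by (auto simp: vge_def)
  define t where "t = - b * inverse (4*a)"
  have "in_O v b" using h b_def unfolding scaled_pos_level_def vge_poly_def in_O_def by auto
  then have "in_O v t" unfolding t_def using unit_inverse[OF a4u] by (intro in_O_intros)
  then have g: "in_GL2_O (1, t, 0, 1)" by (simp add: in_O_intros vge_def)
  have h2: "scaled_pos_level (mat_subst F (1, t, 0, 1)) (mat_subst F1 (1, t, 0, 1)) w"
    using scaled_pos_level_mat_subst[OF h g] .
  have c4: "coeff (mat_subst F1 (1, t, 0, 1)) 4 = a"
    unfolding coeff_mat_subst subst_coeff_defs a_def
    by simp
  have c3: "coeff (mat_subst F1 (1, t, 0, 1)) 3 = 0"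
    unfolding coeff_mat_subst subst_coeff_defs a_def[symmetric] b_def[symmetric] t_def
    using \<open>4*a \<noteq> 0\<close> by (simp add: field_simps)
  obtain r where "jac_triple_root (mat_subst F1 (1, t, 0, 1)) r"
    using scaled_pos_level_jac_triple_root[OF h2 odd] by blast
  then have "\<exists>x0 z0. bq_root_mult_ge v (mat_subst F1 (1, t, 0, 1)) x0 z0 3"
    using depressed_quartic_triple_root[OF _ _ c3 _ _ odd] h2 aO c4
    unfolding scaled_pos_level_def by auto
  then show ?thesis using triple_root_if_triple_root_mat_subst[OF h g] by blast
qed

lemma triple_root_odd_char:
  assumes h: "scaled_pos_level F F1 w" and odd: "\<not> vge v 1 2"
  shows "\<exists>x0 z0. bq_root_mult_ge v F1 x0 z0 3"
proof (cases "vge v 1 (coeff F1 4)")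
  case False
  then show ?thesis using triple_root_if_lead_unit[OF h odd] by blast
next
  case a1: True
  show ?thesis
  proof (cases "vge v 1 (coeff F1 0)")
    case False
    have h2: "scaled_pos_level (mat_subst F (0, 1, 1, 0)) (mat_subst F1 (0, 1, 1, 0)) w"
      using scaled_pos_level_mat_subst[OF h in_GL2_O_swap] .
    have "coeff (mat_subst F1 (0, 1, 1, 0)) 4 = coeff F1 0"
      unfolding coeff_mat_subst subst_coeff_defs by simp
    then show ?thesis
      using triple_root_if_lead_unit[OF h2 odd] False
        triple_root_if_triple_root_mat_subst[OF h in_GL2_O_swap] by simp
  next
    case e1: True
    obtain r where "jac_triple_root F1 r" using scaled_pos_level_jac_triple_root[OF h odd] by blast
    then show ?thesis using triple_root_if_extreme_coeffs_vanish[OF _ _ a1 e1] h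
      unfolding scaled_pos_level_def by blast
  qed
qed

end

context dvr
begin

lemma pos_level_jac_coeffs_vge_2:
  assumes int: "vge_poly 0 F" and nd: "bq_disc F \<noteq> 0" and lv: "bq_level v F > 0"
    and odd: "\<not> vge v 1 2" and c1: "vge v 1 (coeff F 2)"
    and A41: "vge v 1 (jac_a4 F)" and A61: "vge v 1 (jac_a6 F)"
  shows "vge v 2 (jac_a4 F)" "vge v 2 (jac_a6 F)"
proof -
  obtain r s t where h: "in_O v r" "in_O v s" "in_O v t" "vge v 1 s" "vge v 3 t"
    "vge v 2 (coeff F 2 + 3*r - s^2)" "vge v 4 (jac_a4 F + 2*r*coeff F 2 + 3*r^2 - 2*s*t)"
    "vge v 6 (jac_a6 F + r * jac_a4 F + r^2 * coeff F 2 + r^3 - t^2)"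
    using pos_level_congruences[OF int nd lv odd] by blast
  define c where "c = coeff F 2"
  note h' = h[folded c_def] and c1' = c1[folded c_def]
  have "r^3 = (jac_a6 F + r * jac_a4 F + r^2 * c + r^3 - t^2)
      - jac_a6 F - r * jac_a4 F - r^2 * c + t^2"
    by simp
  moreover have "vge v 1 ((jac_a6 F + r * jac_a4 F + r^2 * c + r^3 - t^2)
      - jac_a6 F - r * jac_a4 F - r^2 * c + t^2)"
    by (insert h'(8) A41 A61 c1' vge_0_if_in_O[OF h(1)] h(5), rule vge_weaken,
        (assumption | rule vge_bound_rules)+, simp)
  ultimately have "vge v 1 (r^3)" by simp
  then have r1: "vge v 1 r" using vge_1_of_power[of r 3] h(1) by simp
  have "jac_a6 F = (jac_a6 F + r * jac_a4 F + r^2 * c + r^3 - t^2)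
      - r * jac_a4 F - r^2 * c - r^3 + t^2"
    by simp
  moreover have "vge v 2 ((jac_a6 F + r * jac_a4 F + r^2 * c + r^3 - t^2)
      - r * jac_a4 F - r^2 * c - r^3 + t^2)"
    by (insert h'(8) A41 r1 c1' h(5), rule vge_weaken, (assumption | rule vge_bound_rules)+, simp)
  ultimately show "vge v 2 (jac_a6 F)" by simp
  have "jac_a4 F = (jac_a4 F + 2*r*c + 3*r^2 - 2*s*t) - 2*r*c - 3*r^2 + 2*s*t" by simp
  moreover have "vge v 2 ((jac_a4 F + 2*r*c + 3*r^2 - 2*s*t) - 2*r*c - 3*r^2 + 2*s*t)"
    by (insert h'(7) r1 c1' h(4) h(5), rule vge_weaken, (assumption | rule vge_bound_rules)+, simp)
  ultimately show "vge v 2 (jac_a4 F)" by simp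
qed

text \<open>The step of part (ii) keeps \<open>F\<close> integral when \<open>v(F) = 0\<close> in odd residue characteristic.\<close>

lemma vge_2_coeff0_odd_char:
  assumes int: "vge_poly 0 F" and dg: "degree F \<le> 4" and nd: "bq_disc F \<noteq> 0"
    and lv: "bq_level v F > 0" and odd: "\<not> vge v 1 2" and nv1: "\<not> vge_poly 1 F"
    and e1: "vge v 1 (coeff F 0)" and d1: "vge v 1 (coeff F 1)" and c1: "vge v 1 (coeff F 2)"
  shows "vge v 2 (coeff F 0)"
proof -
  define a where "a = coeff F 4"
  define b where "b = coeff F 3"
  define c where "c = coeff F 2"
  define d where "d = coeff F 1"
  define e where "e = coeff F 0"
  have ab: "vge v 0 a" "vge v 0 b" using int unfolding vge_poly_def a_def b_def by auto
  have cde: "vge v 1 c" "vge v 1 d" "vge v 1 e" using c1 d1 e1 c_def d_def e_def by auto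
  have A4e: "jac_a4 F = b*d - 4*a*e" and A6e: "jac_a6 F = a*d^2 + b^2*e - 4*a*c*e"
    unfolding jac_a4_def jac_a6_def a_def b_def c_def d_def e_def by simp_all
  have "vge v 1 (jac_a4 F)" "vge v 1 (jac_a6 F)" unfolding A4e A6e
    by (insert cde ab, rule vge_weaken, (assumption | rule vge_bound_rules)+, simp)+
  from pos_level_jac_coeffs_vge_2[OF int nd lv odd c1 this]
  have A42: "vge v 2 (b*d - 4*a*e)" and A62: "vge v 2 (a*d^2 + b^2*e - 4*a*c*e)"
    unfolding A4e A6e .
  show ?thesis
  proof (cases "vge v 1 b")
    case False
    then have bu: "in_O v (b^2)" "\<not> vge v 1 (b^2)" using unit_power[of b 2] ab(2)
      by (auto simp: in_O_def)
    have "b^2 * e = (a*d^2 + b^2*e - 4*a*c*e) - a*d^2 + 4*a*c*e" by simp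
    moreover have "vge v 2 ((a*d^2 + b^2*e - 4*a*c*e) - a*d^2 + 4*a*c*e)"
      by (insert A62 cde ab, rule vge_weaken, (assumption | rule vge_bound_rules)+, simp)
    ultimately have "vge v 2 (b^2 * e)" by simp
    then show ?thesis using vge_unit_mult_cancel[OF bu] e_def by simp
  next
    case True
    then have "\<not> vge v 1 a"
      using nv1 cde vge_polyI[OF _ dg, of 1] le_4_cases unfolding a_def b_def c_def d_def e_def
      by blast
    then have au: "in_O v (4*a)" "\<not> vge v 1 (4*a)"
      using unit_mult[of 4 a] unit_four[OF odd] ab(1) by (auto simp: in_O_def)
    have "4*a*e = b*d - (b*d - 4*a*e)" by simp
    moreover have "vge v 2 (b*d - (b*d - 4*a*e))"
      by (insert A42 cde True, rule vge_weaken, (assumption | rule vge_bound_rules)+, simp)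
    ultimately have "vge v 2 (4*a*e)" by simp
    then show ?thesis using vge_unit_mult_cancel[OF au] e_def by (simp add: mult.assoc)
  qed
qed

end

section \<open>Smith normal form\<close>

context dvr
begin

lemma smith_form_entry_11_one:
  assumes "in_O v b" "in_O v c" "in_O v d" "d - b*c \<noteq> 0"
  shows "\<exists>U V \<alpha>. in_GL2_O U \<and> in_GL2_O V \<and> (1, b, c, d) = mat_mult (mat_mult U (1, 0, 0, \<pi>^\<alpha>)) V"
proof -
  define \<delta> where "\<delta> = d - b*c"
  have dO: "in_O v \<delta>" "\<delta> \<noteq> 0" using assms \<delta>_def by (auto intro!: in_O_intros)
  define \<alpha> where "\<alpha> = nat (v \<delta>)"
  have "v \<delta> = int \<alpha>" using dO \<alpha>_def by (simp add: in_O_def vge_def)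
  define w where "w = \<delta> / \<pi>^\<alpha>"
  have p0: "\<pi>^\<alpha> \<noteq> 0" using pi_nonzero by simp
  have "v w = 0" "w \<noteq> 0"
    unfolding w_def using v_divide[OF dO(2) p0] \<open>v \<delta> = int \<alpha>\<close> dO p0 by simp_all
  then have wu: "in_O v w" "\<not> vge v 1 w" by (auto simp: in_O_def vge_def)
  have "w * \<pi>^\<alpha> = \<delta>" unfolding w_def using p0 by simp
  then have "(1, b, c, d) = mat_mult (mat_mult (1, 0, c, w) (1, 0, 0, \<pi>^\<alpha>)) (1, b, 0, 1)"
    using \<delta>_def by (simp add: algebra_simps)
  moreover have "in_GL2_O (1, 0, c, w)" using wu assms by (simp add: in_O_intros)
  moreover have "in_GL2_O (1, b, 0, 1)" using assms by (simp add: in_O_intros vge_def)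
  ultimately show ?thesis by blast
qed

lemma smith_form_entry_one:
  assumes int: "in_O v A" "in_O v B" "in_O v C" "in_O v D" and one: "1 \<in> {A, B, C, D}"
    and det: "A*D - B*C \<noteq> 0"
  shows "\<exists>U V \<alpha>. in_GL2_O U \<and> in_GL2_O V \<and> (A, B, C, D) = mat_mult (mat_mult U (1, 0, 0, \<pi>^\<alpha>)) V"
proof -
  let ?P = "(0, 1, 1, 0) :: 'a mat2"
  from one consider "A = 1" | "B = 1" | "C = 1" | "D = 1" by auto
  then show ?thesis
  proof cases
    case 1
    then show ?thesis using smith_form_entry_11_one[of B C D] int det by simp
  next
    case 2
    have "C - A*D \<noteq> 0" using det 2 by (simp add: algebra_simps)
    then obtain U V \<alpha> where u: "in_GL2_O U" "in_GL2_O V"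
      "(1, A, D, C) = mat_mult (mat_mult U (1, 0, 0, \<pi>^\<alpha>)) V"
      using smith_form_entry_11_one[of A D C] int by blast
    have "(A, B, C, D) = mat_mult (1, A, D, C) ?P" using 2 by simp
    also have "\<dots> = mat_mult (mat_mult U (1, 0, 0, \<pi>^\<alpha>)) (mat_mult V ?P)"
      using u(3) mat_mult_assoc by metis
    finally show ?thesis using u in_GL2_O_mult in_GL2_O_swap by blast
  next
    case 3
    have "B - D*A \<noteq> 0" using det 3 by (simp add: algebra_simps)
    then obtain U V \<alpha> where u: "in_GL2_O U" "in_GL2_O V"
      "(1, D, A, B) = mat_mult (mat_mult U (1, 0, 0, \<pi>^\<alpha>)) V"
      using smith_form_entry_11_one[of D A B] int by blast
    have "(A, B, C, D) = mat_mult ?P (1, D, A, B)" using 3 by simp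
    also have "\<dots> = mat_mult (mat_mult (mat_mult ?P U) (1, 0, 0, \<pi>^\<alpha>)) V"
      using u(3) mat_mult_assoc by metis
    finally show ?thesis using u in_GL2_O_mult in_GL2_O_swap by blast
  next
    case 4
    have "A - C*B \<noteq> 0" using det 4 by (simp add: algebra_simps)
    then obtain U V \<alpha> where u: "in_GL2_O U" "in_GL2_O V"
      "(1, C, B, A) = mat_mult (mat_mult U (1, 0, 0, \<pi>^\<alpha>)) V"
      using smith_form_entry_11_one[of C B A] int by blast
    have "(A, B, C, D) = mat_mult (mat_mult ?P (1, C, B, A)) ?P" using 4 by simp
    also have "\<dots> = mat_mult (mat_mult (mat_mult ?P U) (1, 0, 0, \<pi>^\<alpha>)) (mat_mult V ?P)"
      using u(3) mat_mult_assoc by metis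
    finally show ?thesis using u in_GL2_O_mult in_GL2_O_swap by blast
  qed
qed

text \<open>Smith normal form over \<open>O_K\<close>: dividing \<open>S\<close> by an entry of least valuation makes it
  integral with an entry \<open>1\<close>.\<close>

lemma smith_normal_form:
  assumes det: "mat_det S \<noteq> 0"
  shows "\<exists>l U V \<alpha>. l \<noteq> 0 \<and> in_GL2_O U \<and> in_GL2_O V \<and>
    S = mat_scale l (mat_mult (mat_mult U (1, 0, 0, \<pi>^\<alpha>)) V)"
proof -
  obtain A B C D where S: "S = (A, B, C, D)" by (cases S) auto
  define X where "X = {x. x \<in> {A, B, C, D} \<and> x \<noteq> 0}"
  have fin: "finite X" and ne: "X \<noteq> {}" using det S unfolding X_def by auto
  have "Min (v ` X) \<in> v ` X" using fin ne by simp
  then obtain E where E: "E \<in> X" "v E = Min (v ` X)" by auto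
  have E0: "E \<noteq> 0" using E X_def by simp
  have intq: "in_O v (x / E)" if "x \<in> {A, B, C, D}" for x
  proof (cases "x = 0")
    case False
    then have "x \<in> X" using that X_def by simp
    then have "v E \<le> v x" using fin E(2) by simp
    then show ?thesis using v_divide[OF False E0] by (simp add: in_O_def vge_def)
  qed (simp add: in_O_def vge_def)
  have one: "1 \<in> {A/E, B/E, C/E, D/E}" using E E0 X_def by auto
  have "(A/E)*(D/E) - (B/E)*(C/E) = (A*D - B*C) / (E*E)" using E0 by (simp add: field_simps)
  then have "(A/E)*(D/E) - (B/E)*(C/E) \<noteq> 0" using det S E0 by simp
  then obtain U V \<alpha> where u: "in_GL2_O U" "in_GL2_O V"
    "(A/E, B/E, C/E, D/E) = mat_mult (mat_mult U (1, 0, 0, \<pi>^\<alpha>)) V"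
    using smith_form_entry_one[OF intq intq intq intq one] by blast
  have "S = mat_scale E (A/E, B/E, C/E, D/E)" using S E0 by simp
  then show ?thesis using u E0 by metis
qed

end

section \<open>The procedure\<close>

context dvr
begin

lemma vge_poly_iff_le_bq_val:
  assumes F0: "F \<noteq> 0" and dg: "degree F \<le> 4"
  shows "vge_poly n F \<longleftrightarrow> n \<le> bq_val v F"
proof -
  define X where "X = {coeff F i | i. i \<le> 4 \<and> coeff F i \<noteq> 0}"
  have fin: "finite X" unfolding X_def by simp
  have "coeff F (degree F) \<in> X" using F0 dg unfolding X_def by auto
  then have ne: "X \<noteq> {}" by blast
  have bv: "bq_val v F = Min (v ` X)" unfolding bq_val_def X_def by simp
  show ?thesis
  proof
    assume "vge_poly n F"
    then have "\<forall>x\<in>X. n \<le> v x" unfolding X_def vge_poly_def vge_def by auto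
    then show "n \<le> bq_val v F" unfolding bv using fin ne by simp
  next
    assume a: "n \<le> bq_val v F"
    show "vge_poly n F"
    proof (rule vge_polyI[OF _ dg])
      fix i :: nat
      assume "i \<le> 4"
      show "vge v n (coeff F i)"
      proof (cases "coeff F i = 0")
        case False
        then have "coeff F i \<in> X" using \<open>i \<le> 4\<close> unfolding X_def by blast
        then have "Min (v ` X) \<le> v (coeff F i)" using fin by simp
        then show ?thesis using a bv by (simp add: vge_def)
      qed simp
    qed
  qed
qed

lemma bq_F1_normalised:
  assumes int: "vge_poly 0 F" and dg: "degree F \<le> 4" and F0: "F \<noteq> 0"
    and bv: "bq_val v F = int w"
  shows "F = smult (\<pi>^w) (bq_F1 v \<pi> F)" "vge_poly 0 (bq_F1 v \<pi> F)" "degree (bq_F1 v \<pi> F) \<le> 4"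
    "\<not> vge_poly 1 (bq_F1 v \<pi> F)"
proof -
  have F1: "bq_F1 v \<pi> F = smult (inverse (\<pi>^w)) F"
    unfolding bq_F1_def bv by (simp add: power_int_minus)
  then show FF1: "F = smult (\<pi>^w) (bq_F1 v \<pi> F)" using pi_nonzero by simp
  show "degree (bq_F1 v \<pi> F) \<le> 4" using dg F1 by simp
  have "vge_poly n (bq_F1 v \<pi> F) \<longleftrightarrow> vge_poly (n + int w) F" for n
    unfolding vge_poly_def by (subst (2) FF1) (simp add: vge_pi_power_mult_iff)
  then show "vge_poly 0 (bq_F1 v \<pi> F)" "\<not> vge_poly 1 (bq_F1 v \<pi> F)"
    using vge_poly_iff_le_bq_val[OF F0 dg] bv by simp_all
qed

definition rescale :: "'a poly \<Rightarrow> 'a poly" where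
  "rescale P = smult (inverse (\<pi>^2)) (mat_subst P (\<pi>, 0, 0, 1))"

lemma degree_rescale: "degree (rescale P) \<le> 4"
  unfolding rescale_def using degree_mat_subst[of P] degree_smult_le order.trans by blast

lemma vge_coeff_rescale_iff:
  assumes "i \<le> 4"
  shows "vge v n (coeff (rescale P) i) \<longleftrightarrow> vge v (n + 2 - int i) (coeff P i)"
proof -
  have "\<pi>^2 * coeff (rescale P) i = \<pi>^i * coeff P i"
    unfolding rescale_def coeff_smult coeff_mat_subst_diag_left[OF assms] using pi_nonzero
    by (simp add: field_simps)
  then show ?thesis
    using vge_pi_power_mult_iff[of n 2 "coeff (rescale P) i"]
      vge_pi_power_mult_iff[of "n + 2 - int i" i "coeff P i"] by simp
qed

lemma vge_poly_rescale:
  assumes "vge_poly 0 P" "vge v 2 (coeff P 0)" "vge v 1 (coeff P 1)"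
  shows "vge_poly 0 (rescale P)"
proof (rule vge_polyI[OF _ degree_rescale])
  fix i :: nat
  assume i4: "i \<le> 4"
  have "vge v (2 - int i) (coeff P i)"
    using assms vge_poly_coeff[OF assms(1), of i] vge_mono[of "2 - int i" 0 "coeff P i"]
    by (cases "i = 0 \<or> i = 1") auto
  then show "vge v 0 (coeff (rescale P) i)" using vge_coeff_rescale_iff[OF i4] by simp
qed

lemma bq_stepE:
  assumes "bq_step v \<pi> F G"
  obtains M where "in_GL2_O M" "bq_root_mult_ge v (mat_subst (bq_F1 v \<pi> F) M) 0 1 3"
    "G = rescale (mat_subst F M)"
  using assms GL2_O_iff_in_GL2_O unfolding bq_step_def rescale_def
  by (metis mat_subst.simps)

lemma bq_step_equiv_level:
  assumes st: "bq_step v \<pi> F G" and nd: "bq_disc F \<noteq> 0"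
  shows "degree G \<le> 4 \<and> bq_equiv F G \<and> bq_level v G = bq_level v F"
proof -
  obtain M where M: "in_GL2_O M" "G = rescale (mat_subst F M)" using bq_stepE[OF st] by metis
  define S where "S = mat_mult M (\<pi>, 0, 0, 1)"
  have dS: "mat_det S \<noteq> 0" unfolding S_def mat_det_mult
    using in_GL2_O_det_nonzero[OF M(1)] pi_nonzero by simp
  have GS: "G = smult ((inverse \<pi>)^2) (mat_subst F S)"
    unfolding M(2) rescale_def S_def mat_subst_mult by (simp add: power_inverse)
  obtain s11 s21 s12 s22 where Se: "S = (s11, s21, s12, s22)" by (cases S) auto
  have "bq_equiv F G" unfolding bq_equiv_def
    by (rule exI[of _ "inverse \<pi>"], rule exI[of _ s11], rule exI[of _ s12], rule exI[of _ s21],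
        rule exI[of _ s22]) (use GS Se dS pi_nonzero in \<open>simp add: mult.commute mat_subst.simps\<close>)
  moreover have "inverse \<pi> * mat_det S = mat_det M"
    unfolding S_def mat_det_mult using pi_nonzero by (cases M) (simp add: field_simps)
  then have "v (inverse \<pi> * mat_det S) = 0" using in_GL2_O_det[OF M(1)] unit_v_eq_0 by auto
  then have "bq_level v G = bq_level v F"
    unfolding GS using bq_level_equiv[OF _ dS nd] pi_nonzero by simp
  ultimately show ?thesis using degree_rescale M(2) by blast
qed

end

context dvr
begin

lemma coeffs_3_4_vge_1_if_unit_B:
  assumes ent: "in_O v A" "in_O v B" "in_O v C" "in_O v D" "\<not> vge v 1 (A*D - B*C)"
    and nB: "\<not> vge v 1 B" and p: "vge v 1 p0" "vge v 1 p1" "vge v 1 p2"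
    and c0: "vge v 1 (subst_coeff0 p0 p1 p2 p3 p4 A B C D)"
    and c1: "vge v 1 (subst_coeff1 p0 p1 p2 p3 p4 A B C D)"
  shows "vge v 1 p3" "vge v 1 p4"
proof -
  have entv: "vge v 0 A" "vge v 0 B" "vge v 0 C" "vge v 0 D" using ent by (auto simp: in_O_def)
  have det: "in_O v (A*D - B*C)" using ent by (auto intro!: in_O_intros)
  define q where "q = p3*D + p4*B"
  define X where "X = 3*p3*A*D + p3*B*C + 4*p4*A*B"
  have "B^3 * q = subst_coeff0 p0 p1 p2 p3 p4 A B C D - (p0*D^4 + p1*B*D^3 + p2*B^2*D^2)"
    unfolding q_def subst_coeff0_def by algebra
  moreover have "vge v 1 (subst_coeff0 p0 p1 p2 p3 p4 A B C D - (p0*D^4 + p1*B*D^3 + p2*B^2*D^2))"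
    by (insert c0 p entv, rule vge_weaken, (assumption | rule vge_bound_rules)+, simp)
  ultimately have "vge v 1 (B^3 * q)" by metis
  then have q1: "vge v 1 q" using vge_unit_mult_cancel unit_power[OF ent(2) nB, of 3] by blast
  have "B^2 * X = subst_coeff1 p0 p1 p2 p3 p4 A B C D
      - (p0*4*C*D^3 + p1*(A*D^3 + 3*B*C*D^2) + p2*(2*A*B*D^2 + 2*B^2*C*D))"
    unfolding X_def subst_coeff1_def by algebra
  moreover have "vge v 1 (subst_coeff1 p0 p1 p2 p3 p4 A B C D
      - (p0*4*C*D^3 + p1*(A*D^3 + 3*B*C*D^2) + p2*(2*A*B*D^2 + 2*B^2*C*D)))"
    by (insert c1 p entv, rule vge_weaken, (assumption | rule vge_bound_rules)+, simp)
  ultimately have "vge v 1 (B^2 * X)" by metis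
  then have X1: "vge v 1 X" using vge_unit_mult_cancel unit_power[OF ent(2) nB, of 2] by blast
  have "(A*D - B*C) * p3 = 4*A*q - X" unfolding q_def X_def by algebra
  moreover have "vge v 1 (4*A*q - X)"
    by (insert q1 X1 entv, rule vge_weaken, (assumption | rule vge_bound_rules)+, simp)
  ultimately have "vge v 1 ((A*D - B*C) * p3)" by metis
  then show p31: "vge v 1 p3" using vge_unit_mult_cancel[OF det ent(5)] by blast
  have "B * p4 = q - p3*D" unfolding q_def by simp
  moreover have "vge v 1 (q - p3*D)"
    by (insert q1 p31 entv, rule vge_weaken, (assumption | rule vge_bound_rules)+, simp)
  ultimately have "vge v 1 (B * p4)" by metis
  then show "vge v 1 p4" using vge_unit_mult_cancel[OF ent(2) nB] by blast
qed

text \<open>Modulo \<open>\<pi>\<close>, \<open>P\<close> is a nonzero quartic with the triple root \<open>(0 : 1)\<close>, which is then its only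
  repeated root; so an integral \<open>L\<close> moving a repeated root of \<open>P\<close> to \<open>(0 : 1)\<close> fixes
  \<open>(0 : 1)\<close> modulo \<open>\<pi>\<close>.\<close>

lemma fixes_triple_root_0_1:
  assumes dP: "degree P \<le> 4" and nP: "\<not> vge_poly 1 P"
    and p: "vge v 1 (coeff P 0)" "vge v 1 (coeff P 1)" "vge v 1 (coeff P 2)"
    and g: "in_GL2_O (A, B, C, D)"
    and c: "vge v 1 (coeff (mat_subst P (A, B, C, D)) 0)"
      "vge v 1 (coeff (mat_subst P (A, B, C, D)) 1)"
  shows "vge v 1 B"
proof (rule ccontr)
  assume nB: "\<not> vge v 1 B"
  have ent: "in_O v A" "in_O v B" "in_O v C" "in_O v D" "\<not> vge v 1 (A*D - B*C)"
    using g by simp_all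
  have "vge v 1 (coeff P 3)" "vge v 1 (coeff P 4)"
    using coeffs_3_4_vge_1_if_unit_B[OF ent nB p c[unfolded coeff_mat_subst]] by simp_all
  then have "vge_poly 1 P" using p le_4_cases vge_polyI[OF _ dP] by blast
  then show False using nP by simp
qed

end

context dvr
begin

text \<open>If \<open>U\<close> already moves the triple root of \<open>F\<^sub>1\<close> to \<open>(0 : 1)\<close>, every step from \<open>F\<close> agrees up to
  \<open>GL\<^sub>2(O\<^sub>K)\<close> with the step through \<open>U\<close>: the matrix \<open>L = U\<^sup>-\<^sup>1 M\<close> has \<open>B \<equiv> 0\<close>, so it
  commutes with \<open>diag(\<pi>, 1)\<close> up to an element of \<open>GL\<^sub>2(O\<^sub>K)\<close>.\<close>

lemma bq_step_conjugate:
  assumes int: "vge_poly 0 F" and dg: "degree F \<le> 4" and F0: "F \<noteq> 0"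
    and bv: "bq_val v F = int w" and gU: "in_GL2_O U"
    and p: "\<And>i. i \<le> 2 \<Longrightarrow> vge v 1 (coeff (mat_subst (bq_F1 v \<pi> F) U) i)"
    and st: "bq_step v \<pi> F G"
  shows "\<exists>L. in_GL2_O L \<and> G = mat_subst (rescale (mat_subst F U)) L"
proof -
  obtain M where M: "in_GL2_O M" "bq_root_mult_ge v (mat_subst (bq_F1 v \<pi> F) M) 0 1 3"
    "G = rescale (mat_subst F M)" using bq_stepE[OF st] by blast
  note F1 = bq_F1_normalised[OF int dg F0 bv]
  define P where "P = mat_subst (bq_F1 v \<pi> F) U"
  have dP: "degree P \<le> 4" unfolding P_def by (rule degree_mat_subst)
  have p012: "vge v 1 (coeff P 0)" "vge v 1 (coeff P 1)" "vge v 1 (coeff P 2)"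
    using p unfolding P_def by simp_all
  have nP: "\<not> vge_poly 1 P" using vge_poly_mat_subst_iff[OF gU F1(3)] F1(4) P_def by simp
  define L where "L = mat_mult (mat_inv U) M"
  have gL: "in_GL2_O L" unfolding L_def using in_GL2_O_mult[OF in_GL2_O_inv[OF gU] M(1)] .
  have UL: "mat_mult U L = M"
    unfolding L_def mat_mult_assoc[symmetric] mat_mult_inv[OF in_GL2_O_det_nonzero[OF gU]]
    by (rule mat_mult_1_left)
  obtain A B C D where Le: "L = (A, B, C, D)" by (cases L) auto
  have "vge v 1 (coeff (mat_subst P L) 0) \<and> vge v 1 (coeff (mat_subst P L) 1)"
    using bq_root_mult_ge_3_at_0_1_coeffs[OF M(2) degree_mat_subst]
    unfolding P_def mat_subst_mult UL by blast
  then have "vge v 1 B"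
    using fixes_triple_root_0_1[OF dP nP p012] gL unfolding Le by blast
  define B' where "B' = B / \<pi>"
  have BB: "B = \<pi> * B'" unfolding B'_def using pi_nonzero by simp
  have "in_O v B'" using \<open>vge v 1 B\<close> BB vge_pi_mult_iff[of 0 B'] by (simp add: in_O_def)
  then have gL': "in_GL2_O (A, B', \<pi>*C, D)" using gL Le BB by (simp add: in_O_intros algebra_simps)
  have "mat_mult L (\<pi>, 0, 0, 1) = mat_mult (\<pi>, 0, 0, 1) (A, B', \<pi>*C, D)"
    unfolding Le BB by (simp add: algebra_simps)
  then have "mat_subst (mat_subst F M) (\<pi>, 0, 0, 1)
      = mat_subst (mat_subst (mat_subst F U) (\<pi>, 0, 0, 1)) (A, B', \<pi>*C, D)"
    unfolding mat_subst_mult UL[symmetric] mat_mult_assoc by simp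
  then have "G = mat_subst (rescale (mat_subst F U)) (A, B', \<pi>*C, D)"
    unfolding M(3) rescale_def mat_subst_smult by simp
  then show ?thesis using gL' by blast
qed

definition vge_weights :: "(nat \<Rightarrow> int) \<Rightarrow> 'a poly \<Rightarrow> bool" where
  "vge_weights \<beta> P \<longleftrightarrow> (\<forall>i\<le>4. vge v (\<beta> i) (coeff P i))"

lemma vge_poly_if_vge_weights:
  assumes "vge_weights \<beta> P" "\<And>i. i \<le> 4 \<Longrightarrow> n \<le> \<beta> i" "degree P \<le> 4"
  shows "vge_poly n P"
proof (rule vge_polyI[OF _ assms(3)])
  fix i :: nat
  assume "i \<le> 4"
  then show "vge v n (coeff P i)" using assms(1,2) vge_mono unfolding vge_weights_def by blast
qed

lemma bq_step_vge_weights: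
  assumes int: "vge_poly 0 F" and dg: "degree F \<le> 4" and F0: "F \<noteq> 0"
    and bv: "bq_val v F = int w" and w1: "w \<le> 1"
    and gU: "in_GL2_O U" and bnd: "vge_weights \<beta> (mat_subst F U)"
    and b0: "\<And>i. i \<le> 4 \<Longrightarrow> 0 \<le> \<beta> i" and b2: "\<And>i. i \<le> 2 \<Longrightarrow> 2 \<le> \<beta> i"
    and st: "bq_step v \<pi> F G"
  shows "vge_poly 0 G \<and> degree G \<le> 4 \<and> G \<noteq> 0 \<and>
    (\<exists>U'. in_GL2_O U' \<and> vge_weights (\<lambda>i. \<beta> i + int i - 2) (mat_subst G U'))"
proof -
  have p: "vge v 1 (coeff (mat_subst (bq_F1 v \<pi> F) U) i)" if "i \<le> 2" for i
  proof -
    have "mat_subst F U = smult (\<pi>^w) (mat_subst (bq_F1 v \<pi> F) U)"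
      using bq_F1_normalised(1)[OF int dg F0 bv] mat_subst_smult by metis
    then have "vge v (\<beta> i) (\<pi>^w * coeff (mat_subst (bq_F1 v \<pi> F) U) i)"
      using bnd that unfolding vge_weights_def by simp
    moreover have "1 + int w \<le> \<beta> i" using b2 that w1 by force
    ultimately show ?thesis using vge_pi_power_mult_iff vge_mono by blast
  qed
  obtain L where L: "in_GL2_O L" "G = mat_subst (rescale (mat_subst F U)) L"
    using bq_step_conjugate[OF int dg F0 bv gU p st] by blast
  have rescaled: "vge_weights (\<lambda>i. \<beta> i + int i - 2) (rescale (mat_subst F U))"
    using bnd vge_coeff_rescale_iff unfolding vge_weights_def by simp
  have G_back: "mat_subst G (mat_inv L) = rescale (mat_subst F U)"
    unfolding L(2) using mat_subst_inv[OF degree_rescale in_GL2_O_det_nonzero[OF L(1)]] .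
  have "0 \<le> \<beta> i + int i - 2" if "i \<le> 4" for i
    using b0[OF that] b2[of i] by (cases "i \<le> 2") auto
  then have "vge_poly 0 (rescale (mat_subst F U))"
    using vge_poly_if_vge_weights[OF rescaled _ degree_rescale] by blast
  then have "vge_poly 0 G" unfolding L(2) using vge_poly_mat_subst_GL2_O[OF L(1)] by blast
  moreover have "G \<noteq> 0"
  proof -
    have "mat_subst F U \<noteq> 0" using mat_subst_nonzero[OF dg in_GL2_O_det_nonzero[OF gU] F0] .
    moreover have "mat_det (\<pi>, 0, 0, 1) \<noteq> 0" using pi_nonzero by simp
    ultimately have "mat_subst (mat_subst F U) (\<pi>, 0, 0, 1) \<noteq> 0"
      using mat_subst_nonzero[OF degree_mat_subst] by blast
    then have "rescale (mat_subst F U) \<noteq> 0" unfolding rescale_def using pi_nonzero by simp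
    then show ?thesis
      unfolding L(2) using mat_subst_nonzero[OF degree_rescale in_GL2_O_det_nonzero[OF L(1)]]
        by blast
  qed
  moreover have "degree G \<le> 4" unfolding L(2) by (rule degree_mat_subst)
  ultimately show ?thesis
    using G_back rescaled in_GL2_O_inv[OF L(1)] by (intro conjI exI[of _ "mat_inv L"]) simp_all
qed

end

context dvr
begin

text \<open>Non-minimality: a \<open>K\<close>-equivalence \<open>\<mu>\<^sup>2 F \<circ> S\<close> lowering \<open>v(\<Delta>)\<close> has \<open>v(\<mu> det S) < 0\<close>; after
  putting \<open>S\<close> in Smith normal form this becomes an integral \<open>\<mu>\<^sup>2 (F \<circ> U)(x, \<pi>\<^sup>\<alpha> z)\<close> with
  \<open>v(\<mu>) + \<alpha> < 0\<close>.\<close>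

lemma non_minimal_diagonal_form:
  assumes nd: "bq_disc F \<noteq> 0" and Gi: "vge_poly 0 G" and eq: "bq_equiv F G"
    and lt: "v (bq_disc G) < v (bq_disc F)"
  obtains \<mu> U \<alpha> where "\<mu> \<noteq> 0" "in_GL2_O U" "v \<mu> + int \<alpha> < 0"
    "vge_poly 0 (smult (\<mu>^2) (mat_subst (mat_subst F U) (1, 0, 0, \<pi>^\<alpha>)))"
proof -
  obtain \<mu> m11 m12 m21 m22 where e: "\<mu> \<noteq> 0" "m11 * m22 - m12 * m21 \<noteq> 0"
      "G = smult (\<mu>^2) (bq_subst F m11 m12 m21 m22)"
    using eq unfolding bq_equiv_def by blast
  define S where "S = (m11, m21, m12, m22)"
  have GS: "G = smult (\<mu>^2) (mat_subst F S)" using e(3) S_def by (simp add: mat_subst.simps)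
  have dS: "mat_det S \<noteq> 0" using e(2) S_def by (simp add: mult.commute)
  have md0: "\<mu> * mat_det S \<noteq> 0" using e(1) dS by simp
  have "v (bq_disc G) = 12 * v (\<mu> * mat_det S) + v (bq_disc F)"
    unfolding GS bq_disc_equiv[OF e(1) dS]
    using v_mult[of "(\<mu> * mat_det S)^12" "bq_disc F"] v_power[OF md0, of 12] nd md0 by simp
  then have neg: "v (\<mu> * mat_det S) < 0" using lt by simp
  obtain l U V \<alpha> where sm: "l \<noteq> 0" "in_GL2_O U" "in_GL2_O V"
      "S = mat_scale l (mat_mult (mat_mult U (1, 0, 0, \<pi>^\<alpha>)) V)"
    using smith_normal_form[OF dS] by blast
  define \<mu>1 where "\<mu>1 = \<mu> * l^2"
  define H where "H = smult (\<mu>1^2) (mat_subst (mat_subst F U) (1, 0, 0, \<pi>^\<alpha>))"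
  have "mat_subst F S = smult (l^4) (mat_subst (mat_subst (mat_subst F U) (1, 0, 0, \<pi>^\<alpha>)) V)"
    unfolding sm(4) mat_subst_scale mat_subst_mult by simp
  then have "G = mat_subst H V" unfolding GS H_def \<mu>1_def mat_subst_smult
    by (simp add: power_mult_distrib power2_eq_square power4_eq_xxxx mult_ac)
  moreover have "degree H \<le> 4" unfolding H_def using degree_mat_subst[of "mat_subst F U"] by simp
  ultimately have "mat_subst G (mat_inv V) = H"
    using mat_subst_inv in_GL2_O_det_nonzero[OF sm(3)] by simp
  then have "vge_poly 0 H" using vge_poly_mat_subst_GL2_O[OF in_GL2_O_inv[OF sm(3)] Gi] by simp
  moreover have "v \<mu>1 + int \<alpha> < 0"
  proof -
    have "v (mat_det U) = 0" "v (mat_det V) = 0"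
      using in_GL2_O_det[OF sm(2)] in_GL2_O_det[OF sm(3)] unit_v_eq_0 by blast+
    moreover have "mat_det S = l^2 * (mat_det U * \<pi>^\<alpha> * mat_det V)"
      unfolding sm(4) mat_det_scale mat_det_mult by simp
    ultimately have "v (mat_det S) = 2 * v l + int \<alpha>"
      using sm(1) in_GL2_O_det_nonzero[OF sm(2)] in_GL2_O_det_nonzero[OF sm(3)] pi_nonzero
      by (simp add: v_mult v_power)
    then show ?thesis using neg v_mult[OF e(1) dS] v_mult[of \<mu> "l^2"] v_power[OF sm(1), of 2]
        e(1) sm(1) \<mu>1_def by simp
  qed
  moreover have "\<mu>1 \<noteq> 0" using e(1) sm(1) \<mu>1_def by simp
  ultimately show ?thesis using that sm(2) H_def by blast
qed

text \<open>Reading off the coefficients of the diagonal form gives, in the frame \<open>U\<close> composed with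
  \<open>x \<leftrightarrow> z\<close>, the lower bounds \<open>2m - \<alpha> i\<close> with \<open>m = -v(\<mu>)\<close>; \<open>\<alpha> = 0\<close> would give \<open>v(F) \<ge> 2\<close>.\<close>

lemma non_minimal_vge_weights:
  assumes int: "vge_poly 0 F" and dg: "degree F \<le> 4" and nd: "bq_disc F \<noteq> 0"
    and nv2: "\<not> vge_poly 2 F" and nm: "bq_non_minimal v F"
  obtains U \<alpha> m where "in_GL2_O U" "1 \<le> \<alpha>" "\<alpha> + 1 \<le> m"
    "vge_weights (\<lambda>i. max 0 (2*m - \<alpha> * int i)) (mat_subst F U)"
proof -
  obtain G where G: "bq_integral v G" "bq_equiv F G" "v (bq_disc G) < v (bq_disc F)"
    using nm unfolding bq_non_minimal_def bq_minimal_def by (auto simp: not_le)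
  obtain \<mu> U \<alpha> where d: "\<mu> \<noteq> 0" "in_GL2_O U" "v \<mu> + int \<alpha> < 0"
      "vge_poly 0 (smult (\<mu>^2) (mat_subst (mat_subst F U) (1, 0, 0, \<pi>^\<alpha>)))"
    using non_minimal_diagonal_form[OF nd _ G(2,3)] G(1) bq_integral_iff_vge_poly by metis
  define m where "m = - v \<mu>"
  define U' where "U' = mat_mult U (0, 1, 1, 0)"
  have gU': "in_GL2_O U'" unfolding U'_def using in_GL2_O_mult[OF d(2) in_GL2_O_swap] .
  have bnd: "vge v (2*m - int \<alpha> * int i) (coeff (mat_subst F U') i)" if i4: "i \<le> 4" for i
  proof (cases "coeff (mat_subst F U') i = 0")
    case False
    have "coeff (mat_subst F U') i = coeff (mat_subst F U) (4 - i)"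
      unfolding U'_def mat_subst_mult[symmetric] using coeff_mat_subst_swap[OF i4] .
    then have "coeff (smult (\<mu>^2) (mat_subst (mat_subst F U) (1, 0, 0, \<pi>^\<alpha>))) (4 - i)
        = \<mu>^2 * (coeff (mat_subst F U') i * \<pi>^(\<alpha> * i))"
      using coeff_mat_subst_diag_right[of "4 - i" "mat_subst F U" "\<pi>^\<alpha>"] i4
        by (simp add: power_mult)
    moreover have "\<mu>^2 * (coeff (mat_subst F U') i * \<pi>^(\<alpha> * i)) \<noteq> 0"
      using False d(1) pi_nonzero by simp
    ultimately have "0 \<le> v (\<mu>^2 * (coeff (mat_subst F U') i * \<pi>^(\<alpha> * i)))"
      using d(4) unfolding vge_poly_def vge_def by metis
    also have "\<dots> = 2 * v \<mu> + v (coeff (mat_subst F U') i) + int \<alpha> * int i"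
      using d(1) False pi_nonzero by (simp add: v_mult v_power)
    finally show ?thesis unfolding m_def vge_def by simp
  qed (simp add: vge_def)
  have "1 \<le> int \<alpha>"
  proof (rule ccontr)
    assume "\<not> 1 \<le> int \<alpha>"
    then have "\<alpha> = 0" by simp
    then have "vge_weights (\<lambda>i. 2*m) (mat_subst F U')" "2 \<le> 2*m"
      using bnd d(3) m_def unfolding vge_weights_def by auto
    then have "vge_poly 2 (mat_subst F U')"
      using vge_poly_if_vge_weights[OF _ _ degree_mat_subst] by blast
    then show False using vge_poly_mat_subst_iff[OF gU' dg] nv2 by simp
  qed
  moreover have "int \<alpha> + 1 \<le> m" using d(3) m_def by simp
  moreover have "vge_weights (\<lambda>i. max 0 (2*m - int \<alpha> * int i)) (mat_subst F U')"
    using bnd vge_poly_coeff[OF vge_poly_mat_subst_GL2_O[OF gU' int]]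
    unfolding vge_weights_def by (simp add: max_def)
  ultimately show ?thesis using that gU' by blast
qed

end

lemma max_weight_bounds:
  fixes \<alpha> m :: int
  assumes "1 \<le> \<alpha>" "\<alpha> + 1 \<le> m" "i \<le> 4"
  shows "i \<le> 2 \<Longrightarrow> 2 \<le> max 0 (2*m - \<alpha> * int i)"
    and "0 \<le> max 0 (2*m - \<alpha> * int i)"
    and "0 \<le> max 0 (2*m - \<alpha> * int i) + int i - 2"
    and "i \<le> 2 \<Longrightarrow> 2 \<le> max 0 (2*m - \<alpha> * int i) + int i - 2"
    and "\<alpha> = 1 \<Longrightarrow> 2 \<le> max 0 (2*m - \<alpha> * int i) + int i - 2"
    and "2 \<le> \<alpha> \<Longrightarrow> 2 \<le> max 0 (2*m - \<alpha> * int i) + int i - 2 + int i - 2"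
  using assms le_4_cases[OF assms(3)] by auto

context dvr
begin

lemma triple_root_if_vge_2_frame:
  assumes int: "vge_poly 0 F" and dg: "degree F \<le> 4" and F0: "F \<noteq> 0"
    and bv: "bq_val v F = int w" and w1: "w \<le> 1"
    and gU: "in_GL2_O U" and bnd: "\<And>i. i \<le> 2 \<Longrightarrow> vge v 2 (coeff (mat_subst F U) i)"
  shows "\<exists>x0 z0. bq_root_mult_ge v (bq_F1 v \<pi> F) x0 z0 3"
proof -
  note F1 = bq_F1_normalised[OF int dg F0 bv]
  define P where "P = mat_subst (bq_F1 v \<pi> F) U"
  have "mat_subst F U = smult (\<pi>^w) P" unfolding P_def by (subst F1(1)) (rule mat_subst_smult)
  have "vge v 1 (coeff P i)" if "i \<le> 2" for i
  proof -
    have "vge v (1 + int w) (\<pi>^w * coeff P i)"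
      using bnd[OF that] vge_mono[of "1 + int w" 2] w1 \<open>mat_subst F U = smult (\<pi>^w) P\<close> by simp
    then show ?thesis using vge_pi_power_mult_iff by blast
  qed
  then have "bq_root_mult_ge v P 0 1 3"
    using bq_root_mult_ge_3_at_0_1I[OF _ degree_mat_subst] vge_poly_mat_subst_GL2_O[OF gU F1(2)]
    unfolding P_def by simp
  from bq_root_mult_ge_3_mat_subst[OF this in_GL2_O_inv[OF gU]]
  show ?thesis unfolding P_def mat_subst_inv[OF F1(3) in_GL2_O_det_nonzero[OF gU]] .
qed

lemma bq_F1_triple_root:
  assumes int: "vge_poly 0 F" and dg: "degree F \<le> 4" and nd: "bq_disc F \<noteq> 0" and F0: "F \<noteq> 0"
    and bv: "bq_val v F = int w" and w1: "w \<le> 1" and lv: "bq_level v F > 0"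
    and char2: "residue_char_2 v \<Longrightarrow> bq_non_minimal v F"
  shows "\<exists>x0 z0. bq_root_mult_ge v (bq_F1 v \<pi> F) x0 z0 3"
proof (cases "residue_char_2 v")
  case False
  note F1 = bq_F1_normalised[OF int dg F0 bv]
  have "scaled_pos_level F (bq_F1 v \<pi> F) w"
    unfolding scaled_pos_level_def using int dg nd lv w1 F1 by blast
  then show ?thesis using triple_root_odd_char False unfolding residue_char_2_def by blast
next
  case True
  have "\<not> vge_poly 2 F" using vge_poly_iff_le_bq_val[OF F0 dg] bv w1 by simp
  then obtain U \<alpha> m where d: "in_GL2_O U" "1 \<le> \<alpha>" "\<alpha> + 1 \<le> m"
      "vge_weights (\<lambda>i. max 0 (2*m - \<alpha> * int i)) (mat_subst F U)"
    using non_minimal_vge_weights[OF int dg nd _ char2[OF True]] by blast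
  have "vge v 2 (coeff (mat_subst F U) i)" if "i \<le> 2" for i
  proof -
    have "i \<le> 4" using that by simp
    then show ?thesis
      using vge_mono[OF max_weight_bounds(1)[OF d(2,3) _ that]] d(4) unfolding vge_weights_def
      by blast
  qed
  then show ?thesis using triple_root_if_vge_2_frame[OF int dg F0 bv w1 d(1)] by blast
qed

lemma bq_step_vge_poly:
  assumes int: "vge_poly 0 F" and dg: "degree F \<le> 4" and nd: "bq_disc F \<noteq> 0" and F0: "F \<noteq> 0"
    and bv: "bq_val v F = int w" and w1: "w \<le> 1" and lv: "bq_level v F > 0"
    and char2: "residue_char_2 v \<Longrightarrow> bq_non_minimal v F" and st: "bq_step v \<pi> F G"
  shows "vge_poly 0 G"
proof -
  obtain M where M: "in_GL2_O M" "bq_root_mult_ge v (mat_subst (bq_F1 v \<pi> F) M) 0 1 3"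
      "G = rescale (mat_subst F M)"
    using bq_stepE[OF st] by blast
  note F1 = bq_F1_normalised[OF int dg F0 bv]
  have FMi: "vge_poly 0 (mat_subst F M)" using vge_poly_mat_subst_GL2_O[OF M(1) int] .
  have c012: "vge v 1 (coeff (mat_subst (bq_F1 v \<pi> F) M) i)" if "i \<le> 2" for i
    using bq_root_mult_ge_3_at_0_1_coeffs[OF M(2) degree_mat_subst] that
    by (auto simp: le_Suc_eq numeral_2_eq_2)
  have FM: "mat_subst F M = smult (\<pi>^w) (mat_subst (bq_F1 v \<pi> F) M)"
    by (subst F1(1)) (rule mat_subst_smult)
  consider "w = 1" | "w = 0" "\<not> residue_char_2 v" | "w = 0" "residue_char_2 v" using w1 by linarith
  then show ?thesis
  proof cases
    case 1
    have "vge v 2 (coeff (mat_subst F M) 0)" "vge v 1 (coeff (mat_subst F M) 1)"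
      unfolding FM 1 using c012[of 0] c012[of 1] vge_pi_mult_iff[of 1] vge_mono[of 1 2] by auto
    then show ?thesis unfolding M(3) using vge_poly_rescale[OF FMi] by blast
  next
    case 2
    have FMe: "mat_subst F M = mat_subst (bq_F1 v \<pi> F) M" using FM 2 by simp
    have "scaled_pos_level (mat_subst F M) (mat_subst F M) 0"
      using scaled_pos_level_mat_subst[OF _ M(1), of F F 0] int dg nd lv
      unfolding scaled_pos_level_def by simp
    moreover have "\<not> vge_poly 1 (mat_subst F M)"
      using vge_poly_mat_subst_iff[OF M(1) dg] vge_poly_iff_le_bq_val[OF F0 dg] bv 2 by simp
    ultimately have "vge v 2 (coeff (mat_subst F M) 0)"
      using vge_2_coeff0_odd_char[OF _ degree_mat_subst] c012 FMe 2(2)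
      unfolding scaled_pos_level_def residue_char_2_def by simp
    moreover have "vge v 1 (coeff (mat_subst F M) 1)" using c012[of 1] FMe by simp
    ultimately show ?thesis unfolding M(3) using vge_poly_rescale[OF FMi] by blast
  next
    case 3
    have "\<not> vge_poly 2 F" using vge_poly_iff_le_bq_val[OF F0 dg] bv w1 by simp
    then obtain U \<alpha> m where d: "in_GL2_O U" "1 \<le> \<alpha>" "\<alpha> + 1 \<le> m"
        "vge_weights (\<lambda>i. max 0 (2*m - \<alpha> * int i)) (mat_subst F U)"
      using non_minimal_vge_weights[OF int dg nd _ char2[OF 3(2)]] by blast
    have "\<And>i. i \<le> 4 \<Longrightarrow> 0 \<le> max 0 (2*m - \<alpha> * int i)"
      "\<And>i. i \<le> 2 \<Longrightarrow> 2 \<le> max 0 (2*m - \<alpha> * int i)"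
      using max_weight_bounds(1,2)[OF d(2,3)] by simp_all
    then show ?thesis using bq_step_vge_weights[OF int dg F0 bv w1 d(1,4) _ _ st] by blast
  qed
qed

lemma bq_step_twice_vge_2:
  assumes int: "vge_poly 0 F" and dg: "degree F \<le> 4" and nd: "bq_disc F \<noteq> 0" and F0: "F \<noteq> 0"
    and bv: "bq_val v F = int w" and w1: "w \<le> 1" and nm: "bq_non_minimal v F"
    and st: "bq_step v \<pi> F G"
  shows "bq_val v G \<ge> 2 \<or> (\<forall>H. bq_step v \<pi> G H \<longrightarrow> bq_val v H \<ge> 2)"
proof -
  have "\<not> vge_poly 2 F" using vge_poly_iff_le_bq_val[OF F0 dg] bv w1 by simp
  then obtain U \<alpha> m where d: "in_GL2_O U" "1 \<le> \<alpha>" "\<alpha> + 1 \<le> m"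
      "vge_weights (\<lambda>i. max 0 (2*m - \<alpha> * int i)) (mat_subst F U)"
    using non_minimal_vge_weights[OF int dg nd _ nm] by blast
  define \<beta> where "\<beta> i = max 0 (2*m - \<alpha> * int i) + int i - 2" for i :: nat
  note bounds = max_weight_bounds[OF d(2,3)]
  have "\<And>i. i \<le> 4 \<Longrightarrow> 0 \<le> max 0 (2*m - \<alpha> * int i)"
    "\<And>i. i \<le> 2 \<Longrightarrow> 2 \<le> max 0 (2*m - \<alpha> * int i)"
    using bounds(1,2) by simp_all
  from bq_step_vge_weights[OF int dg F0 bv w1 d(1,4) this st]
  obtain U' where G: "vge_poly 0 G" "degree G \<le> 4" "G \<noteq> 0" "in_GL2_O U'"
      "vge_weights \<beta> (mat_subst G U')"
    unfolding \<beta>_def[symmetric] by blast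
  have val_ge_2: "2 \<le> bq_val v P" if "vge_weights \<gamma> (mat_subst P V)" "\<And>i. i \<le> 4 \<Longrightarrow> 2 \<le> \<gamma> i"
    "in_GL2_O V" "degree P \<le> 4" "P \<noteq> 0" for \<gamma> P V
  proof -
    have "vge_poly 2 (mat_subst P V)"
      by (rule vge_poly_if_vge_weights[OF that(1,2) degree_mat_subst])
    then show ?thesis
      using vge_poly_mat_subst_iff[OF that(3,4)] vge_poly_iff_le_bq_val[OF that(5,4)]
      by simp
  qed
  show ?thesis
  proof (cases "2 \<le> bq_val v G")
    case False
    have "0 \<le> bq_val v G" using vge_poly_iff_le_bq_val[OF G(3,2)] G(1) by simp
    then have w': "bq_val v G = int (nat (bq_val v G))" "nat (bq_val v G) \<le> 1" using False
      by simp_all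
    have "\<alpha> \<noteq> 1" using val_ge_2[OF G(5) _ G(4,2,3)] bounds(5) False \<beta>_def by auto
    have "2 \<le> bq_val v H" if st2: "bq_step v \<pi> G H" for H
    proof -
      have "\<And>i. i \<le> 4 \<Longrightarrow> 0 \<le> \<beta> i" "\<And>i. i \<le> 2 \<Longrightarrow> 2 \<le> \<beta> i"
        using bounds(3,4) unfolding \<beta>_def by simp_all
      from bq_step_vge_weights[OF G(1-3) w' G(4,5) this st2]
      obtain U'' where H: "degree H \<le> 4" "H \<noteq> 0" "in_GL2_O U''"
          "vge_weights (\<lambda>i. \<beta> i + int i - 2) (mat_subst H U'')"
        by blast
      have "2 \<le> \<alpha>" using \<open>\<alpha> \<noteq> 1\<close> d(2) by simp
      then show ?thesis using val_ge_2[OF H(4) _ H(3,1,2)] bounds(6) unfolding \<beta>_def by simp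
    qed
    then show ?thesis by blast
  qed simp
qed

end

theorem theorem4p2:
  fixes v :: "'a::field \<Rightarrow> int" and \<pi> :: 'a and F :: "'a poly"
  assumes dv: "discrete_valuation v"
    and unif: "\<pi> \<noteq> 0" "v \<pi> = 1"
    and perfect: "residue_field_perfect v"
    and quartic: "binary_quartic F" and integral: "bq_integral v F"
    and nonsing: "bq_nonsingular F"
    and vF: "bq_val v F \<in> {0, 1}"
    and level_pos: "bq_level v F > 0"
    and char2: "residue_char_2 v \<Longrightarrow> bq_non_minimal v F"
  shows "(\<exists>x0 z0. bq_root_mult_ge v (bq_F1 v \<pi> F) x0 z0 3)
       \<and> (\<forall>G. bq_step v \<pi> F G \<longrightarrow>
            binary_quartic G \<and> bq_integral v G \<and> bq_equiv F G \<and> bq_level v G = bq_level v F)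
       \<and> (bq_non_minimal v F \<longrightarrow>
            (\<forall>G. bq_step v \<pi> F G \<longrightarrow>
               bq_val v G \<ge> 2 \<or> (\<forall>H. bq_step v \<pi> G H \<longrightarrow> bq_val v H \<ge> 2)))"
proof -
  interpret dvr v \<pi> using dv unif by unfold_locales auto
  have dg: "degree F \<le> 4" using quartic binary_quartic_def by blast
  have int: "vge_poly 0 F" using integral bq_integral_iff_vge_poly by blast
  have nd: "bq_disc F \<noteq> 0" using nonsing bq_nonsingular_def by blast
  then have F0: "F \<noteq> 0" by (auto simp: bq_disc_def bq_a_def bq_b_def bq_c_def bq_d_def bq_e_def)
  obtain w :: nat where w: "bq_val v F = int w" "w \<le> 1" using vF
    by (auto intro: that[of 0] that[of 1])
  note hyps = int dg nd F0 w
  show ?thesis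
    using bq_F1_triple_root[OF hyps level_pos char2]
      bq_step_vge_poly[OF hyps level_pos char2] bq_step_equiv_level[OF _ nd]
      bq_step_twice_vge_2[OF hyps]
    unfolding binary_quartic_def bq_integral_iff_vge_poly by blast
qed

end
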